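(* Let $\mathfrak g_1,\mathfrak g_2$ be finite-dimensional complex Lie algebras. Then the Jordan–Kronecker invariants of $\mathfrak g_1\oplus\mathfrak g_2$ are the union (as multisets of Jordan tuples and Kronecker sizes) of the Jordan–Kronecker invariants of $\mathfrak g_1$ and of $\mathfrak g_2$; in particular Jordan tuples coming from $\mathfrak g_1$ and from $\mathfrak g_2$ correspond to different eigenvalues.
   Context: For a finite-dimensional complex Lie algebra $\mathfrak g$ and $x\in\mathfrak g^*$, let $\mathcal A_x$ be the skew form $(\xi,\eta)\mapsto\langle x,[\xi,\eta]\rangle$ on $\mathfrak g$. By the Jordan–Kronecker theorem, a pair of skew forms $A,B$ on a finite-dimensional complex vector space admits a basis in which both are block-diagonal with blocks of the types: Jordan $2n\times2n$ block with eigenvalue $\mu$ ($A_i=\begin{pmatrix}0&J_\mu\\-J_\mu^T&0\end{pmatrix}$, $B_i=\begin{pmatrix}0&I_n\\-I_n&0\end{pmatrix}$), Jordan block with eigenvalue $\infty$ (roles of $A_i,B_i$ swapped), or Kronecker $(2k-1)\times(2k-1)$ block ($k\ge1$; $A_i=\begin{pmatrix}0&P\\-P^T&0\end{pmatrix}$, $B_i=\begin{pmatrix}0&Q\\-Q^T&0\end{pmatrix}$, $P=(I_{k-1}|0)$, $Q=(0|I_{k-1})$); block numbers and sizes grouped by eigenvalue are unique. For $(x,a)$ in a nonempty Zariski open subset of $\mathfrak g^*\times\mathfrak g^*$ the pair $(\mathcal A_x,\mathcal A_a)$ has the same Kronecker sizes $2k_1-1,\dots,2k_q-1$ and the same multiset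 of Jordan tuples $J_{\lambda_i}(2n_{i1},\dots,2n_{is_i})$ (for each distinct eigenvalue $\lambda_i$, the sizes of the Jordan blocks with that eigenvalue, $n_{i1}\ge\dots\ge n_{is_i}$; the eigenvalues depend on $(x,a)$ and are regarded as distinct formal symbols). These are the Jordan–Kronecker (JK) invariants of $\mathfrak g$. *)

theory Defs
  imports "Jordan_Normal_Form.Jordan_Normal_Form" "HOL-Library.Multiset"
begin

text \<open>A Lie algebra of dimension n is given by its structure constants with respect to
  a basis e_0, ..., e_(n-1): [e_i, e_j] = sum over k < n of c i j k e_k.
  Values of c outside the index range are irrelevant.\<close>

definition lie_alg :: "nat \<Rightarrow> (nat \<Rightarrow> nat \<Rightarrow> nat \<Rightarrow> complex) \<Rightarrow> bool" where
  "lie_alg n c \<longleftrightarrow>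
     (\<forall>i<n. \<forall>k<n. c i i k = 0) \<and>
     (\<forall>i<n. \<forall>j<n. \<forall>k<n. c i j k = - c j i k) \<and>
     (\<forall>i<n. \<forall>j<n. \<forall>k<n. \<forall>m<n.
        (\<Sum>l<n. c i j l * c l k m + c j k l * c l i m + c k i l * c l j m) = 0)"

text \<open>Direct sum g1 + g2: basis of g1 (indices < n1) followed by basis of g2.\<close>
definition lie_dsum :: "nat \<Rightarrow> (nat \<Rightarrow> nat \<Rightarrow> nat \<Rightarrow> complex) \<Rightarrow> nat \<Rightarrow>
    (nat \<Rightarrow> nat \<Rightarrow> nat \<Rightarrow> complex) \<Rightarrow> (nat \<Rightarrow> nat \<Rightarrow> nat \<Rightarrow> complex)" where
  "lie_dsum n1 c1 n2 c2 = (\<lambda>i j k.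
     if i < n1 \<and> j < n1 \<and> k < n1 then c1 i j k
     else if n1 \<le> i \<and> n1 \<le> j \<and> n1 \<le> k \<and> i < n1 + n2 \<and> j < n1 + n2 \<and> k < n1 + n2
       then c2 (i - n1) (j - n1) (k - n1)
     else 0)"

text \<open>For x in g* (coordinates in the dual basis), the skew form A_x(xi,eta) = <x,[xi,eta]>,
  as a Gram matrix in the basis e_i.\<close>
definition coadj_form :: "nat \<Rightarrow> (nat \<Rightarrow> nat \<Rightarrow> nat \<Rightarrow> complex) \<Rightarrow> complex vec \<Rightarrow> complex mat" where
  "coadj_form n c x = mat n n (\<lambda>(i,j). \<Sum>k<n. x $ k * c i j k)"

datatype jkblock =
    Kron nat             \<comment> \<open>Kronecker block of size 2k-1\<close>
  | Jord complex nat     \<comment> \<open>Jordan block of size 2m, eigenvalue mu\<close>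
  | JordInf nat          \<comment> \<open>Jordan block of size 2m, eigenvalue infinity\<close>

fun jk_valid :: "jkblock \<Rightarrow> bool" where
  "jk_valid (Kron k) = (k \<ge> 1)"
| "jk_valid (Jord \<mu> m) = (m \<ge> 1)"
| "jk_valid (JordInf m) = (m \<ge> 1)"

definition skew_blk :: "complex mat \<Rightarrow> complex mat" where
  "skew_blk M = four_block_mat (0\<^sub>m (dim_row M) (dim_row M)) M
                               (- transpose_mat M) (0\<^sub>m (dim_col M) (dim_col M))"

definition kron_P :: "nat \<Rightarrow> complex mat" where
  "kron_P k = mat (k - 1) k (\<lambda>(i,j). if j = i then 1 else 0)"

definition kron_Q :: "nat \<Rightarrow> complex mat" where
  "kron_Q k = mat (k - 1) k (\<lambda>(i,j). if j = Suc i then 1 else 0)"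

fun blkA :: "jkblock \<Rightarrow> complex mat" where
  "blkA (Kron k) = skew_blk (kron_P k)"
| "blkA (Jord \<mu> m) = skew_blk (jordan_block m \<mu>)"
| "blkA (JordInf m) = skew_blk (1\<^sub>m m)"

fun blkB :: "jkblock \<Rightarrow> complex mat" where
  "blkB (Kron k) = skew_blk (kron_Q k)"
| "blkB (Jord \<mu> m) = skew_blk (1\<^sub>m m)"
| "blkB (JordInf m) = skew_blk (jordan_block m 0)"

fun blkdiag :: "complex mat list \<Rightarrow> complex mat" where
  "blkdiag [] = 0\<^sub>m 0 0"
| "blkdiag (M # Ms) = (let R = blkdiag Ms in
     four_block_mat M (0\<^sub>m (dim_row M) (dim_col R)) (0\<^sub>m (dim_row R) (dim_col M)) R)"

definition JK_decomp :: "complex mat \<Rightarrow> complex mat \<Rightarrow> jkblock list \<Rightarrow> bool" where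
  "JK_decomp A B bl \<longleftrightarrow>
     (\<forall>b\<in>set bl. jk_valid b) \<and>
     (\<exists>P. P \<in> carrier_mat (dim_row A) (dim_row A) \<and> invertible_mat P \<and>
          transpose_mat P * A * P = blkdiag (map blkA bl) \<and>
          transpose_mat P * B * P = blkdiag (map blkB bl))"

fun kron_k :: "jkblock \<Rightarrow> nat option" where
  "kron_k (Kron k) = Some k"
| "kron_k _ = None"

text \<open>Eigenvalue of a Jordan block: Some mu for finite mu, None for infinity.\<close>
fun jord_ev :: "jkblock \<Rightarrow> complex option option" where
  "jord_ev (Kron k) = None"
| "jord_ev (Jord \<mu> m) = Some (Some \<mu>)"
| "jord_ev (JordInf m) = Some None"

fun jord_size :: "jkblock \<Rightarrow> nat" where
  "jord_size (Kron k) = 0"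
| "jord_size (Jord \<mu> m) = m"
| "jord_size (JordInf m) = m"

text \<open>Kronecker invariant: multiset of the k_i (block sizes 2k_i - 1).\<close>
definition kron_inv :: "jkblock list \<Rightarrow> nat multiset" where
  "kron_inv bl = mset (List.map_filter kron_k bl)"

text \<open>Jordan invariant: for each distinct eigenvalue, the Jordan tuple
  (multiset of the n_ij, block sizes 2 n_ij); the eigenvalues themselves are forgotten.\<close>
definition jord_inv :: "jkblock list \<Rightarrow> nat multiset multiset" where
  "jord_inv bl = image_mset (\<lambda>e. mset (map jord_size (filter (\<lambda>b. jord_ev b = Some e) bl)))
                            (mset_set (set (List.map_filter jord_ev bl)))"

definition has_JK_type :: "complex mat \<Rightarrow> complex mat \<Rightarrow> nat multiset \<Rightarrow> nat multiset multiset \<Rightarrow> bool" where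
  "has_JK_type A B K J \<longleftrightarrow> (\<exists>bl. JK_decomp A B bl \<and> kron_inv bl = K \<and> jord_inv bl = J)"

text \<open>Polynomial functions on g* x g* = C^n x C^n (points are pairs of vectors of dimension n).\<close>
inductive_set polyfun :: "nat \<Rightarrow> (complex vec \<times> complex vec \<Rightarrow> complex) set" for n where
  pf_const: "(\<lambda>_. c) \<in> polyfun n"
| pf_var1: "i < n \<Longrightarrow> (\<lambda>(x,a). x $ i) \<in> polyfun n"
| pf_var2: "i < n \<Longrightarrow> (\<lambda>(x,a). a $ i) \<in> polyfun n"
| pf_add: "f \<in> polyfun n \<Longrightarrow> g \<in> polyfun n \<Longrightarrow> (\<lambda>p. f p + g p) \<in> polyfun n"
| pf_mult: "f \<in> polyfun n \<Longrightarrow> g \<in> polyfun n \<Longrightarrow> (\<lambda>p. f p * g p) \<in> polyfun n"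

definition zariski_open :: "nat \<Rightarrow> (complex vec \<times> complex vec) set \<Rightarrow> bool" where
  "zariski_open n U \<longleftrightarrow> (\<exists>S \<subseteq> polyfun n.
     U = {(x,a). dim_vec x = n \<and> dim_vec a = n \<and> (\<exists>f\<in>S. f (x,a) \<noteq> 0)})"

definition JK_invariants :: "nat \<Rightarrow> (nat \<Rightarrow> nat \<Rightarrow> nat \<Rightarrow> complex) \<Rightarrow>
    nat multiset \<Rightarrow> nat multiset multiset \<Rightarrow> bool" where
  "JK_invariants n c K J \<longleftrightarrow> (\<exists>U. zariski_open n U \<and> U \<noteq> {} \<and>
     (\<forall>(x,a)\<in>U. has_JK_type (coadj_form n c x) (coadj_form n c a) K J))"

end

theory Submission
  imports Defs "Subresultants.Subresultant_Gcd" "HOL-Computational_Algebra.Fundamental_Theorem_Algebra"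
    "HOL-Computational_Algebra.Field_as_Ring"
begin

text \<open>For a point (x, a) = (x1 + x2, a1 + a2) of the direct sum, the forms A_x and A_a are block
  diagonal, so Jordan--Kronecker decompositions of the two summands concatenate. The Kronecker sizes
  then simply add, and so do the Jordan tuples as long as no eigenvalue occurs in both summands.
  That this holds generically is seen through a perturbed characteristic polynomial: for C of rank
  at most the number q of Kronecker blocks, det (A_x - mu A_a + C) vanishes at every finite
  eigenvalue mu (there the pencil has more than q independent kernel vectors), and a suitable C,
  supported on the Kronecker blocks, makes it nonzero. Disjointness of the spectra is thus implied
  by the nonvanishing of the resultant of the two summands' polynomials, and absence of infinite
  eigenvalues in the first summand by det (A_(a1) + C1) \<noteq> 0. Both are polynomial conditions on
  (x, a) that hold somewhere (replacing x1 by x1 + t a1 translates the roots of the first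
  polynomial), so by irreducibility of affine space they hold on a nonempty Zariski open set,
  together with the genericity conditions of the two summands.\<close>

section \<open>Polynomial functions on pairs of covectors\<close>

locale ring_of_functions =
  fixes R :: "('p \<Rightarrow> 'a::comm_ring_1) set"
  assumes const: "(\<lambda>_. c) \<in> R"
    and add: "f \<in> R \<Longrightarrow> g \<in> R \<Longrightarrow> (\<lambda>p. f p + g p) \<in> R"
    and mult: "f \<in> R \<Longrightarrow> g \<in> R \<Longrightarrow> (\<lambda>p. f p * g p) \<in> R"
begin

lemma uminus: "f \<in> R \<Longrightarrow> (\<lambda>p. - f p) \<in> R"
  using mult[OF const[of "-1"]] by simp

lemma If: "f \<in> R \<Longrightarrow> g \<in> R \<Longrightarrow> (\<lambda>p. if P then f p else g p) \<in> R"
  by (cases P) simp_all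

lemma sum: "finite S \<Longrightarrow> (\<And>i. i \<in> S \<Longrightarrow> f i \<in> R) \<Longrightarrow> (\<lambda>p. \<Sum>i\<in>S. f i p) \<in> R"
  by (induction S rule: finite_induct) (auto intro: const add)

lemma prod: "finite S \<Longrightarrow> (\<And>i. i \<in> S \<Longrightarrow> f i \<in> R) \<Longrightarrow> (\<lambda>p. \<Prod>i\<in>S. f i p) \<in> R"
  by (induction S rule: finite_induct) (auto intro: const mult)

lemma prod_list: "(\<And>h. h \<in> set hs \<Longrightarrow> h \<in> R) \<Longrightarrow> (\<lambda>p. \<Prod>h\<leftarrow>hs. h p) \<in> R"
  by (induction hs) (auto intro: const mult)

lemma det:
  assumes "\<And>p. M p \<in> carrier_mat m m" and "\<And>i j. i < m \<Longrightarrow> j < m \<Longrightarrow> (\<lambda>p. M p $$ (i,j)) \<in> R"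
  shows "(\<lambda>p. det (M p)) \<in> R"
proof -
  have "(\<lambda>p. det (M p)) =
      (\<lambda>p. \<Sum>\<pi> | \<pi> permutes {0..<m}. of_int (sign \<pi>) * (\<Prod>i=0..<m. M p $$ (i, \<pi> i)))"
    using carrier_matD[OF assms(1)] by (simp add: det_def)
  also have "\<dots> \<in> R"
    using assms(2) permutes_in_image
    by (intro sum mult[OF const] prod) (auto simp: finite_permutations)
  finally show ?thesis .
qed

end

definition pair_space :: "nat \<Rightarrow> (complex vec \<times> complex vec) set" where
  "pair_space n = carrier_vec n \<times> carrier_vec n"

lemma zariski_open_iff:
  "zariski_open n U \<longleftrightarrow> (\<exists>S \<subseteq> polyfun n. U = {p \<in> pair_space n. \<exists>f\<in>S. f p \<noteq> 0})"
proof -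
  have "{(x,a). dim_vec x = n \<and> dim_vec a = n \<and> (\<exists>f\<in>S. f (x,a) \<noteq> 0)} =
      {p \<in> pair_space n. \<exists>f\<in>S. f p \<noteq> 0}" for S :: "(complex vec \<times> complex vec \<Rightarrow> complex) set"
    by (auto simp: pair_space_def intro: carrier_vecI)
  then show ?thesis unfolding zariski_open_def by simp
qed

lemma ring_of_functions_polyfun: "ring_of_functions (polyfun n)"
  by unfold_locales (auto intro: polyfun.intros)

lemma polyfun_fst: "i < n \<Longrightarrow> (\<lambda>p. fst p $ i) \<in> polyfun n"
  using pf_var1 by (simp add: case_prod_beta')

lemma polyfun_snd: "i < n \<Longrightarrow> (\<lambda>p. snd p $ i) \<in> polyfun n"
  using pf_var2 by (simp add: case_prod_beta')

lemma polyfun_compose: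
  assumes "f \<in> polyfun m"
    and "\<And>i. i < m \<Longrightarrow> (\<lambda>p. fst (\<sigma> p) $ i) \<in> polyfun n"
    and "\<And>i. i < m \<Longrightarrow> (\<lambda>p. snd (\<sigma> p) $ i) \<in> polyfun n"
  shows "(\<lambda>p. f (\<sigma> p)) \<in> polyfun n"
  using assms(1)
proof (induction rule: polyfun.induct)
  case (pf_var1 i) then show ?case using assms(2) by (simp add: case_prod_beta)
next
  case (pf_var2 i) then show ?case using assms(3) by (simp add: case_prod_beta)
qed (auto intro: polyfun.intros)

definition line_point :: "nat \<Rightarrow> complex vec \<times> complex vec \<Rightarrow> complex vec \<times> complex vec \<Rightarrow> complex
    \<Rightarrow> complex vec \<times> complex vec" where
  "line_point n p q t = (vec n (\<lambda>i. fst p $ i + t * (fst q $ i - fst p $ i)),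
                         vec n (\<lambda>i. snd p $ i + t * (snd q $ i - snd p $ i)))"

lemma polyfun_on_line: "f \<in> polyfun n \<Longrightarrow> \<exists>P. \<forall>t. f (line_point n p q t) = poly P t"
proof (induction rule: polyfun.induct)
  case (pf_const c) show ?case by (rule exI[of _ "[:c:]"]) simp
next
  case (pf_var1 i) then show ?case
    by (intro exI[of _ "[:fst p $ i, fst q $ i - fst p $ i:]"]) (simp add: line_point_def algebra_simps)
next
  case (pf_var2 i) then show ?case
    by (intro exI[of _ "[:snd p $ i, snd q $ i - snd p $ i:]"]) (simp add: line_point_def algebra_simps)
next
  case (pf_add f g) then show ?case by (metis poly_add)
next
  case (pf_mult f g) then show ?case by (metis poly_mult)
qed

text \<open>Affine space is irreducible: two nonempty basic open sets meet, as one sees on the line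
  through two witnesses.\<close>
lemma polyfun_nonzero_mult:
  assumes f: "f \<in> polyfun n" "p \<in> pair_space n" "f p \<noteq> 0"
    and g: "g \<in> polyfun n" "q \<in> pair_space n" "g q \<noteq> 0"
  shows "\<exists>r\<in>pair_space n. f r * g r \<noteq> 0"
proof -
  obtain P where P: "\<And>t. f (line_point n p q t) = poly P t" using polyfun_on_line[OF f(1)] by blast
  obtain Q where Q: "\<And>t. g (line_point n p q t) = poly Q t" using polyfun_on_line[OF g(1)] by blast
  have "line_point n p q 0 = p" "line_point n p q 1 = q"
    using f(2) g(2) by (auto simp: line_point_def pair_space_def intro!: eq_vecI)
  then have "P \<noteq> 0" "Q \<noteq> 0" using P[of 0] Q[of 1] f(3) g(3) by auto
  then have "finite {t. poly (P * Q) t = 0}" by (simp add: poly_roots_finite)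
  then obtain t where "poly (P * Q) t \<noteq> 0"
    using ex_new_if_finite[OF infinite_UNIV_char_0] by blast
  moreover have "line_point n p q t \<in> pair_space n" by (simp add: line_point_def pair_space_def)
  ultimately show ?thesis using P Q by (metis poly_mult)
qed

lemma polyfun_prod_list_nonzero:
  assumes "\<And>h. h \<in> set hs \<Longrightarrow> h \<in> polyfun n \<and> (\<exists>p\<in>pair_space n. h p \<noteq> 0)"
  shows "\<exists>p\<in>pair_space n. (\<Prod>h\<leftarrow>hs. h p) \<noteq> 0"
  using assms
proof (induction hs)
  case Nil
  have "(0\<^sub>v n, 0\<^sub>v n) \<in> pair_space n" by (simp add: pair_space_def)
  then show ?case by auto
next
  case (Cons h hs)
  interpret polyfun: ring_of_functions "polyfun n" by (rule ring_of_functions_polyfun)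
  obtain q where "q \<in> pair_space n" "(\<Prod>h\<leftarrow>hs. h q) \<noteq> 0" using Cons by auto
  moreover have "\<exists>q'\<in>pair_space n. h q' \<noteq> 0" using Cons.prems by simp
  then obtain q' where "q' \<in> pair_space n" "h q' \<noteq> 0" by blast
  moreover have "(\<lambda>p. \<Prod>h\<leftarrow>hs. h p) \<in> polyfun n" "h \<in> polyfun n"
    using Cons.prems by (auto intro: polyfun.prod_list)
  ultimately show ?case using polyfun_nonzero_mult[of h n q' "\<lambda>p. \<Prod>h\<leftarrow>hs. h p" q] by auto
qed

definition polyfun_poly :: "nat \<Rightarrow> (complex vec \<times> complex vec \<Rightarrow> complex poly) set" where
  "polyfun_poly n = {F. \<forall>k. (\<lambda>p. coeff (F p) k) \<in> polyfun n}"

lemma polyfun_coeff: "F \<in> polyfun_poly n \<Longrightarrow> (\<lambda>p. coeff (F p) k) \<in> polyfun n"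
  by (simp add: polyfun_poly_def)

lemma ring_of_functions_polyfun_poly: "ring_of_functions (polyfun_poly n)"
proof
  interpret polyfun: ring_of_functions "polyfun n" by (rule ring_of_functions_polyfun)
  show "(\<lambda>_. c) \<in> polyfun_poly n" for c by (simp add: polyfun_poly_def polyfun.const)
  show "(\<lambda>p. F p + G p) \<in> polyfun_poly n" if "F \<in> polyfun_poly n" "G \<in> polyfun_poly n" for F G
    using that by (simp add: polyfun_poly_def polyfun.add)
  show "(\<lambda>p. F p * G p) \<in> polyfun_poly n" if "F \<in> polyfun_poly n" "G \<in> polyfun_poly n" for F G
    using that by (auto simp: polyfun_poly_def coeff_mult intro!: polyfun.sum polyfun.mult)
qed

lemma polyfun_poly_linear:
  assumes "u \<in> polyfun n" "v \<in> polyfun n"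
  shows "(\<lambda>p. [:u p, v p:]) \<in> polyfun_poly n"
proof -
  have "(\<lambda>p. coeff [:u p, v p:] k) = (if k = 0 then u else if k = 1 then v else (\<lambda>_. 0))" for k
    by (auto simp: fun_eq_iff coeff_pCons split: nat.split)
  then show ?thesis using assms by (simp add: polyfun_poly_def pf_const)
qed

definition vec_slice :: "nat \<Rightarrow> nat \<Rightarrow> 'a vec \<Rightarrow> 'a vec" where
  "vec_slice s m x = vec m (\<lambda>k. x $ (s + k))"

definition pair_slice :: "nat \<Rightarrow> nat \<Rightarrow> complex vec \<times> complex vec \<Rightarrow> complex vec \<times> complex vec" where
  "pair_slice s m p = (vec_slice s m (fst p), vec_slice s m (snd p))"

definition pair_append :: "complex vec \<times> complex vec \<Rightarrow> complex vec \<times> complex vec \<Rightarrow> complex vec \<times> complex vec" where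
  "pair_append p q = (fst p @\<^sub>v fst q, snd p @\<^sub>v snd q)"

lemma pair_slice_space [simp]: "pair_slice s m p \<in> pair_space m"
  by (simp add: pair_slice_def pair_space_def vec_slice_def)

lemma pair_append_space: "p \<in> pair_space m \<Longrightarrow> q \<in> pair_space k \<Longrightarrow> pair_append p q \<in> pair_space (m + k)"
  by (auto simp: pair_append_def pair_space_def)

lemma pair_slice_append:
  assumes "p \<in> pair_space m" "q \<in> pair_space k"
  shows "pair_slice 0 m (pair_append p q) = p" and "pair_slice m k (pair_append p q) = q"
  using assms by (auto simp: pair_slice_def pair_append_def pair_space_def vec_slice_def intro!: eq_vecI)

lemma exists_pair_slice_nonzero:
  shows "q \<in> pair_space n1 \<Longrightarrow> u q \<noteq> 0 \<Longrightarrow> \<exists>p\<in>pair_space (n1 + n2). u (pair_slice 0 n1 p) \<noteq> 0"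
    and "q \<in> pair_space n2 \<Longrightarrow> u q \<noteq> 0 \<Longrightarrow> \<exists>p\<in>pair_space (n1 + n2). u (pair_slice n1 n2 p) \<noteq> 0"
proof -
  have z: "(0\<^sub>v m, 0\<^sub>v m) \<in> pair_space m" for m by (simp add: pair_space_def)
  show "\<exists>p\<in>pair_space (n1 + n2). u (pair_slice 0 n1 p) \<noteq> 0" if "q \<in> pair_space n1" "u q \<noteq> 0"
    using pair_slice_append(1)[OF that(1) z] pair_append_space[OF that(1) z] that(2) by metis
  show "\<exists>p\<in>pair_space (n1 + n2). u (pair_slice n1 n2 p) \<noteq> 0" if "q \<in> pair_space n2" "u q \<noteq> 0"
    using pair_slice_append(2)[OF z that(1)] pair_append_space[OF z that(1)] that(2) by metis
qed

lemma polyfun_slice: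
  assumes "u \<in> polyfun m" "s + m \<le> n"
  shows "(\<lambda>p. u (pair_slice s m p)) \<in> polyfun n"
  by (rule polyfun_compose[OF assms(1)])
    (use assms(2) in \<open>auto simp: pair_slice_def vec_slice_def intro!: polyfun_fst polyfun_snd\<close>)

lemma polyfun_poly_slice:
  "F \<in> polyfun_poly m \<Longrightarrow> s + m \<le> n \<Longrightarrow> (\<lambda>p. F (pair_slice s m p)) \<in> polyfun_poly n"
  unfolding polyfun_poly_def using polyfun_slice by blast

section \<open>Block-diagonal matrices\<close>

lemma four_block_diag_mult:
  fixes A1 :: "'a::comm_ring_1 mat"
  assumes "A1 \<in> carrier_mat r1 c1" "A2 \<in> carrier_mat r2 c2"
    and "B1 \<in> carrier_mat c1 d1" "B2 \<in> carrier_mat c2 d2"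
  shows "four_block_mat A1 (0\<^sub>m r1 c2) (0\<^sub>m r2 c1) A2 * four_block_mat B1 (0\<^sub>m c1 d2) (0\<^sub>m c2 d1) B2
       = four_block_mat (A1 * B1) (0\<^sub>m r1 d2) (0\<^sub>m r2 d1) (A2 * B2)"
  using assms by (subst mult_four_block_mat[of _ r1 c1 _ c2 _ r2 _ _ d1 _ d2]) auto

lemma four_block_diag_assoc:
  assumes "A \<in> carrier_mat a a'" "B \<in> carrier_mat b b'" "C \<in> carrier_mat c c'"
  shows "four_block_mat A (0\<^sub>m a (b' + c')) (0\<^sub>m (b + c) a') (four_block_mat B (0\<^sub>m b c') (0\<^sub>m c b') C)
       = four_block_mat (four_block_mat A (0\<^sub>m a b') (0\<^sub>m b a') B) (0\<^sub>m (a + b) c') (0\<^sub>m c (a' + b')) C"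
  using assms by (intro eq_matI) auto

lemma blkdiag_Cons:
  "blkdiag (M # Ms) = four_block_mat M (0\<^sub>m (dim_row M) (dim_col (blkdiag Ms)))
     (0\<^sub>m (dim_row (blkdiag Ms)) (dim_col M)) (blkdiag Ms)"
  by (simp add: Let_def)

declare blkdiag.simps(2)[simp del]

lemma blkdiag_dims [simp]:
  "dim_row (blkdiag Ms) = sum_list (map dim_row Ms)" "dim_col (blkdiag Ms) = sum_list (map dim_col Ms)"
  by (induction Ms) (simp_all add: blkdiag_Cons)

lemma blkdiag_map_carrier:
  "(\<And>b. b \<in> set bl \<Longrightarrow> f b \<in> carrier_mat (r b) (c b)) \<Longrightarrow>
   blkdiag (map f bl) \<in> carrier_mat (\<Sum>b\<leftarrow>bl. r b) (\<Sum>b\<leftarrow>bl. c b)"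
  by (induction bl) (auto simp: blkdiag_Cons)

lemma blkdiag_append:
  "blkdiag (Ms @ Ns) = four_block_mat (blkdiag Ms) (0\<^sub>m (dim_row (blkdiag Ms)) (dim_col (blkdiag Ns)))
     (0\<^sub>m (dim_row (blkdiag Ns)) (dim_col (blkdiag Ms))) (blkdiag Ns)"
proof (induction Ms)
  case Nil then show ?case by (intro eq_matI) auto
next
  case (Cons M Ms)
  show ?case
    unfolding append_Cons blkdiag_Cons Cons.IH index_mat_four_block(2,3)
    by (rule four_block_diag_assoc) (auto intro: carrier_matI)
qed

lemma blkdiag_map_Cons:
  assumes "\<And>b. b \<in> set (b0 # bl) \<Longrightarrow> f b \<in> carrier_mat (r b) (c b)"
  shows "blkdiag (map f (b0 # bl)) = four_block_mat (f b0) (0\<^sub>m (r b0) (\<Sum>b\<leftarrow>bl. c b))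
    (0\<^sub>m (\<Sum>b\<leftarrow>bl. r b) (c b0)) (blkdiag (map f bl))"
proof -
  have "blkdiag (map f bl) \<in> carrier_mat (\<Sum>b\<leftarrow>bl. r b) (\<Sum>b\<leftarrow>bl. c b)"
    using assms by (intro blkdiag_map_carrier) auto
  moreover have "f b0 \<in> carrier_mat (r b0) (c b0)" using assms by simp
  ultimately show ?thesis
    unfolding list.map blkdiag_Cons by (simp del: blkdiag_dims add: carrier_matD)
qed

lemma blkdiag_map_mult:
  assumes "\<And>b. b \<in> set bl \<Longrightarrow> dim_col (f b) = dim_row (g b)"
  shows "blkdiag (map f bl) * blkdiag (map g bl) = blkdiag (map (\<lambda>b. f b * g b) bl)"
  using assms
proof (induction bl)
  case (Cons b bl)
  have "(\<Sum>b\<leftarrow>bl. dim_col (f b)) = (\<Sum>b\<leftarrow>bl. dim_row (g b))"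
    using Cons.prems by (intro arg_cong[where f = sum_list] map_cong) auto
  then show ?case
    using Cons by (simp add: blkdiag_Cons four_block_diag_mult[OF carrier_matI carrier_matI carrier_matI carrier_matI] o_def)
qed simp

lemma blkdiag_map_add:
  assumes "\<And>b. b \<in> set bl \<Longrightarrow> f b \<in> carrier_mat (r b) (c b) \<and> g b \<in> carrier_mat (r b) (c b)"
  shows "blkdiag (map f bl) + blkdiag (map g bl) = blkdiag (map (\<lambda>b. f b + g b) bl)"
  using assms
proof (induction bl)
  case (Cons b bl)
  have F: "blkdiag (map f bl) \<in> carrier_mat (\<Sum>b\<leftarrow>bl. r b) (\<Sum>b\<leftarrow>bl. c b)"
    and G: "blkdiag (map g bl) \<in> carrier_mat (\<Sum>b\<leftarrow>bl. r b) (\<Sum>b\<leftarrow>bl. c b)"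
    using Cons.prems by (auto intro!: blkdiag_map_carrier)
  have fb: "f b \<in> carrier_mat (r b) (c b)" and gb: "g b \<in> carrier_mat (r b) (c b)"
    using Cons.prems by auto
  have fgb: "f b + g b \<in> carrier_mat (r b) (c b)" using fb gb by simp
  have "blkdiag (map f (b # bl)) + blkdiag (map g (b # bl)) =
      four_block_mat (f b) (0\<^sub>m (r b) (\<Sum>b\<leftarrow>bl. c b)) (0\<^sub>m (\<Sum>b\<leftarrow>bl. r b) (c b)) (blkdiag (map f bl)) +
      four_block_mat (g b) (0\<^sub>m (r b) (\<Sum>b\<leftarrow>bl. c b)) (0\<^sub>m (\<Sum>b\<leftarrow>bl. r b) (c b)) (blkdiag (map g bl))"
    using Cons.prems by (simp only: blkdiag_map_Cons[where r = r and c = c])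
  also have "\<dots> = four_block_mat (f b + g b) (0\<^sub>m (r b) (\<Sum>b\<leftarrow>bl. c b)) (0\<^sub>m (\<Sum>b\<leftarrow>bl. r b) (c b))
      (blkdiag (map (\<lambda>b. f b + g b) bl))"
    using Cons.prems Cons.IH by (subst add_four_block_mat[OF fb _ _ F gb _ _ G]) auto
  also have "\<dots> = blkdiag (map (\<lambda>b. f b + g b) (b # bl))"
    by (rule blkdiag_map_Cons[symmetric]) (use Cons.prems in auto)
  finally show ?case .
qed (auto intro: eq_matI)

lemma blkdiag_smult: "a \<cdot>\<^sub>m blkdiag Ms = blkdiag (map (\<lambda>M. a \<cdot>\<^sub>m M) Ms)"
proof (induction Ms)
  case (Cons M Ms)
  have "a \<cdot>\<^sub>m blkdiag (M # Ms) = four_block_mat (a \<cdot>\<^sub>m M)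
      (a \<cdot>\<^sub>m 0\<^sub>m (dim_row M) (dim_col (blkdiag Ms))) (a \<cdot>\<^sub>m 0\<^sub>m (dim_row (blkdiag Ms)) (dim_col M))
      (a \<cdot>\<^sub>m blkdiag Ms)"
    unfolding blkdiag_Cons by (rule smult_four_block_mat) auto
  then show ?case using Cons.IH by (simp add: blkdiag_Cons o_def)
qed (auto intro: eq_matI)

lemma blkdiag_det:
  fixes Ms :: "complex mat list"
  assumes "\<And>M. M \<in> set Ms \<Longrightarrow> dim_row M = dim_col M"
  shows "det (blkdiag Ms) = prod_list (map det Ms)"
  using assms
proof (induction Ms)
  case (Cons M Ms)
  have "sum_list (map dim_row Ms) = sum_list (map dim_col Ms)"
    using Cons.prems by (intro arg_cong[where f = sum_list] map_cong) auto
  then have "det (blkdiag (M # Ms)) = det M * det (blkdiag Ms)"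
    unfolding blkdiag_Cons using Cons.prems
    by (intro det_four_block_mat_lower_left_zero) (auto intro: carrier_matI)
  then show ?case using Cons by simp
qed (simp add: det_def)

lemma blkdiag_zero: "blkdiag (map (\<lambda>b. 0\<^sub>m (r b) (c b)) bl) = 0\<^sub>m (\<Sum>b\<leftarrow>bl. r b) (\<Sum>b\<leftarrow>bl. c b)"
  by (induction bl) (auto simp: blkdiag_Cons o_def)

lemma blkdiag_one: "blkdiag (map (\<lambda>b. 1\<^sub>m (k b)) bl) = 1\<^sub>m (\<Sum>b\<leftarrow>bl. k b)"
  by (induction bl) (auto simp: blkdiag_Cons o_def)

section \<open>Kernels, congruences and low-rank perturbations\<close>

lemma zero_mat_mult_vec: "c \<in> carrier_vec nc \<Longrightarrow> 0\<^sub>m nr nc *\<^sub>v c = 0\<^sub>v nr"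
  by (intro eq_vecI) (auto simp: scalar_prod_def)

lemma mat_mult_zero_vec: "A \<in> carrier_mat nr nc \<Longrightarrow> A *\<^sub>v 0\<^sub>v nc = 0\<^sub>v nr"
  by (intro eq_vecI) auto

lemma append_zero_vec: "0\<^sub>v m @\<^sub>v 0\<^sub>v k = 0\<^sub>v (m + k)"
  by (intro eq_vecI) auto

definition rank_at_most :: "nat \<Rightarrow> nat \<Rightarrow> complex mat \<Rightarrow> bool" where
  "rank_at_most n q C \<longleftrightarrow> (\<exists>G H. G \<in> carrier_mat n q \<and> H \<in> carrier_mat q n \<and> C = G * H)"

lemma rank_at_most_carrier: "rank_at_most n q C \<Longrightarrow> C \<in> carrier_mat n n"
  by (auto simp: rank_at_most_def)

lemma rank_at_most_congruence:
  assumes "rank_at_most n q C" "P \<in> carrier_mat n n"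
  shows "rank_at_most n q (P\<^sup>T * C * P)"
proof -
  obtain G H where "G \<in> carrier_mat n q" "H \<in> carrier_mat q n" "C = G * H"
    using assms(1) by (auto simp: rank_at_most_def)
  then have "P\<^sup>T * C * P = (P\<^sup>T * G) * (H * P)" "P\<^sup>T * G \<in> carrier_mat n q" "H * P \<in> carrier_mat q n"
    using assms(2) assoc_mult_mat[of "P\<^sup>T" n n G q H n] assoc_mult_mat[of "P\<^sup>T * G" n q H n P n] by auto
  then show ?thesis unfolding rank_at_most_def by blast
qed

text \<open>The K columns of W lie in the kernel of M, and the left inverse L witnesses that they are
  linearly independent.\<close>
definition null_frame :: "complex mat \<Rightarrow> nat \<Rightarrow> complex mat \<Rightarrow> complex mat \<Rightarrow> bool" where
  "null_frame M K W L \<longleftrightarrow> W \<in> carrier_mat (dim_col M) K \<and> L \<in> carrier_mat K (dim_col M) \<and>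
     M * W = 0\<^sub>m (dim_row M) K \<and> L * W = 1\<^sub>m K"

lemma wide_mat_kernel_nontrivial:
  fixes X :: "'a::idom mat"
  assumes X: "X \<in> carrier_mat q K" and "q < K"
  shows "\<exists>c \<in> carrier_vec K. c \<noteq> 0\<^sub>v K \<and> X *\<^sub>v c = 0\<^sub>v q"
proof -
  define Z where "Z = mat\<^sub>r K K (\<lambda>i. if i = q then 0\<^sub>v K else if i < q then row X i else 0\<^sub>v K)"
  have Z: "Z \<in> carrier_mat K K" by (simp add: Z_def)
  have "(\<lambda>i. if i < q then row X i else 0\<^sub>v K) \<in> {0..<K} \<rightarrow> carrier_vec K" using X by auto
  then have "det Z = 0" unfolding Z_def by (rule det_row_0[OF \<open>q < K\<close>])
  then obtain c where c: "c \<in> carrier_vec K" "c \<noteq> 0\<^sub>v K" "Z *\<^sub>v c = 0\<^sub>v K"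
    using det_0_iff_vec_prod_zero[OF Z] by blast
  have "(X *\<^sub>v c) $ i = (Z *\<^sub>v c) $ i" if "i < q" for i
    using that \<open>q < K\<close> X by (simp add: Z_def)
  then have "X *\<^sub>v c = 0\<^sub>v q" using c(3) X \<open>q < K\<close> by (intro eq_vecI) auto
  then show ?thesis using c by blast
qed

lemma det_add_rank_at_most_eq_0:
  assumes M: "M \<in> carrier_mat n n" and frame: "null_frame M K W L"
    and C: "rank_at_most n q C" and "q < K"
  shows "det (M + C) = 0"
proof -
  obtain G H where G: "G \<in> carrier_mat n q" and H: "H \<in> carrier_mat q n" and C: "C = G * H"
    using C by (auto simp: rank_at_most_def)
  have W: "W \<in> carrier_mat n K" and L: "L \<in> carrier_mat K n"
    and MW: "M * W = 0\<^sub>m n K" and LW: "L * W = 1\<^sub>m K"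
    using frame M by (auto simp: null_frame_def)
  obtain c where c: "c \<in> carrier_vec K" "c \<noteq> 0\<^sub>v K" "(H * W) *\<^sub>v c = 0\<^sub>v q"
    using wide_mat_kernel_nontrivial[of "H * W" q K] H W \<open>q < K\<close> by auto
  define v where "v = W *\<^sub>v c"
  have v: "v \<in> carrier_vec n" using W c by (simp add: v_def)
  have "L *\<^sub>v v = c" using L W c LW by (simp add: v_def flip: assoc_mult_mat_vec)
  then have "v \<noteq> 0\<^sub>v n" using c(2) L by auto
  moreover have "(M + C) *\<^sub>v v = 0\<^sub>v n"
  proof -
    have "M *\<^sub>v v = 0\<^sub>v n" using M W c MW by (simp add: v_def zero_mat_mult_vec flip: assoc_mult_mat_vec)
    moreover have "C *\<^sub>v v = G *\<^sub>v ((H * W) *\<^sub>v c)" using G H W c by (simp add: C v_def)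
    ultimately show ?thesis using M G H v c(3) by (auto simp: C add_mult_distrib_mat_vec)
  qed
  ultimately show ?thesis using det_0_iff_vec_prod_zero[of "M + C" n] M G H v C by auto
qed

lemma null_frame_empty: "null_frame M 0 (0\<^sub>m (dim_col M) 0) (0\<^sub>m 0 (dim_col M))"
  by (auto simp: null_frame_def intro!: eq_matI)

lemma null_frame_vector:
  assumes M: "M \<in> carrier_mat n n" and w: "w \<in> carrier_vec n" "w \<noteq> 0\<^sub>v n" and Mw: "M *\<^sub>v w = 0\<^sub>v n"
  shows "\<exists>W L. null_frame M 1 W L"
proof -
  obtain s where s: "s < n" "w $ s \<noteq> 0" using w by (metis carrier_vecD eq_vecI index_zero_vec)
  define W where "W = mat n 1 (\<lambda>(i, _). w $ i)"
  define L where "L = mat 1 n (\<lambda>(_, j). if j = s then 1 / w $ s else 0)"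
  have "M * W = 0\<^sub>m n 1"
  proof (rule eq_matI)
    fix i j assume "i < dim_row (0\<^sub>m n 1 :: complex mat)" "j < dim_col (0\<^sub>m n 1 :: complex mat)"
    then have "(M * W) $$ (i, j) = (M *\<^sub>v w) $ i" using M w
      by (auto simp: W_def scalar_prod_def)
    then show "(M * W) $$ (i, j) = 0\<^sub>m n 1 $$ (i, j)" using Mw \<open>i < _\<close> \<open>j < _\<close> by simp
  qed (use M in \<open>auto simp: W_def\<close>)
  moreover have "L * W = 1\<^sub>m 1"
  proof -
    have "(\<Sum>i = 0..<n. (if i = s then 1 / w $ s else 0) * w $ i) = (\<Sum>i = 0..<n. if i = s then 1 else 0)"
      using s by (intro sum.cong) auto
    then show ?thesis using s by (intro eq_matI) (auto simp: L_def W_def scalar_prod_def)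
  qed
  ultimately have "null_frame M 1 W L" using M by (auto simp: null_frame_def W_def L_def)
  then show ?thesis by blast
qed

lemma null_frame_zero_columns:
  assumes M: "M \<in> carrier_mat n n" and g: "inj_on g {..<K}" "g ` {..<K} \<subseteq> {..<n}"
    and zero: "\<And>i j. i < n \<Longrightarrow> j < K \<Longrightarrow> M $$ (i, g j) = 0"
  shows "null_frame M K (mat n K (\<lambda>(i, j). if i = g j then 1 else 0))
    (mat K n (\<lambda>(i, j). if j = g i then 1 else 0))"
proof -
  let ?W = "mat n K (\<lambda>(i, j). if i = g j then 1 else 0) :: complex mat"
  let ?L = "mat K n (\<lambda>(i, j). if j = g i then 1 else 0) :: complex mat"
  have "(M * ?W) $$ (i, j) = M $$ (i, g j)" if "i < n" "j < K" for i j
  proof -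
    have "(M * ?W) $$ (i, j) = (\<Sum>l = 0..<n. M $$ (i, l) * (if l = g j then 1 else 0))"
      using that M by (simp add: scalar_prod_def)
    also have "\<dots> = (\<Sum>l = 0..<n. if l = g j then M $$ (i, l) else 0)"
      by (rule sum.cong) auto
    finally show ?thesis using that g(2) by auto
  qed
  then have "M * ?W = 0\<^sub>m n K" using M zero by (intro eq_matI) auto
  moreover have "(?L * ?W) $$ (i, j) = 1\<^sub>m K $$ (i, j)" if "i < K" "j < K" for i j
  proof -
    have "(?L * ?W) $$ (i, j) = (\<Sum>l = 0..<n. (if l = g i then 1 else 0) * (if l = g j then 1 else 0))"
      using that by (simp add: scalar_prod_def)
    also have "\<dots> = (\<Sum>l = 0..<n. if l = g i then (if g i = g j then 1 else 0) else 0)"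
      by (rule sum.cong) auto
    finally show ?thesis using that g unfolding inj_on_def by auto
  qed
  then have "?L * ?W = 1\<^sub>m K" by (intro eq_matI) auto
  ultimately show ?thesis using M by (simp add: null_frame_def)
qed

lemma null_frame_blkdiag:
  assumes "\<And>b. b \<in> set bl \<Longrightarrow> f b \<in> carrier_mat (d b) (d b) \<and> null_frame (f b) (k b) (W b) (L b)"
  shows "null_frame (blkdiag (map f bl)) (\<Sum>b\<leftarrow>bl. k b) (blkdiag (map W bl)) (blkdiag (map L bl))"
proof -
  have f: "f b \<in> carrier_mat (d b) (d b)" and W: "W b \<in> carrier_mat (d b) (k b)"
    and L: "L b \<in> carrier_mat (k b) (d b)" and fW: "f b * W b = 0\<^sub>m (d b) (k b)"
    and LW: "L b * W b = 1\<^sub>m (k b)" if "b \<in> set bl" for b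
    using assms[OF that] carrier_matD[of "f b" "d b" "d b"] by (auto simp: null_frame_def)
  have [simp]: "dim_col (f b) = d b" "dim_row (W b) = d b" if "b \<in> set bl" for b
    using f[OF that] W[OF that] by simp_all
  have "blkdiag (map f bl) * blkdiag (map W bl) = blkdiag (map (\<lambda>b. 0\<^sub>m (d b) (k b)) bl)"
    using f W fW by (subst blkdiag_map_mult) (auto intro!: arg_cong[where f = blkdiag])
  moreover have "blkdiag (map L bl) * blkdiag (map W bl) = blkdiag (map (\<lambda>b. 1\<^sub>m (k b)) bl)"
    using L W LW by (subst blkdiag_map_mult) (auto intro!: arg_cong[where f = blkdiag])
  moreover have "blkdiag (map f bl) \<in> carrier_mat (\<Sum>b\<leftarrow>bl. d b) (\<Sum>b\<leftarrow>bl. d b)"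
    using f by (intro blkdiag_map_carrier)
  ultimately show ?thesis
    using blkdiag_map_carrier[of bl W d k] blkdiag_map_carrier[of bl L k d] W L
    by (auto simp: null_frame_def blkdiag_zero blkdiag_one)
qed

lemma invertible_mat_inverse:
  assumes "invertible_mat P" "P \<in> carrier_mat n n"
  obtains Q where "Q \<in> carrier_mat n n" "P * Q = 1\<^sub>m n" "Q * P = 1\<^sub>m n"
proof -
  obtain Q where PQ: "P * Q = 1\<^sub>m n" and QP: "Q * P = 1\<^sub>m (dim_row Q)"
    using assms unfolding invertible_mat_def inverts_mat_def by auto
  have "dim_row Q = n" using arg_cong[OF QP, of dim_col] assms(2) by simp
  moreover have "dim_col Q = n" using arg_cong[OF PQ, of dim_col] by simp
  ultimately show ?thesis using that PQ QP by (auto intro: carrier_matI)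
qed

lemma det_ne_0_if_left_inverse:
  assumes "P \<in> carrier_mat n n" "Q \<in> carrier_mat n n" "Q * P = 1\<^sub>m n"
  shows "det P \<noteq> 0"
  using det_mult[OF assms(2,1)] assms(3) by auto

lemma det_congruence:
  assumes "P \<in> carrier_mat n n" "M \<in> carrier_mat n n"
  shows "det (P\<^sup>T * M * P) = det P ^ 2 * det M"
proof -
  have "det (P\<^sup>T * M * P) = det (P\<^sup>T * M) * det P" by (rule det_mult[of _ n]) (use assms in auto)
  also have "det (P\<^sup>T * M) = det P\<^sup>T * det M" by (rule det_mult) (use assms in auto)
  finally show ?thesis using det_transpose[OF assms(1)] by (simp add: power2_eq_square)
qed

lemma congruence_add:
  assumes "P \<in> carrier_mat n n" "M \<in> carrier_mat n n" "C \<in> carrier_mat n n"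
  shows "P\<^sup>T * (M + C) * P = P\<^sup>T * M * P + P\<^sup>T * C * P"
proof -
  have "P\<^sup>T * (M + C) = P\<^sup>T * M + P\<^sup>T * C" by (rule mult_add_distrib_mat) (use assms in auto)
  then show ?thesis
    using assms add_mult_distrib_mat[of "P\<^sup>T * M" n n "P\<^sup>T * C" P n] by simp
qed

lemma congruence_cancel:
  fixes P Q X :: "complex mat"
  assumes "P \<in> carrier_mat n n" "Q \<in> carrier_mat n n" "Q * P = 1\<^sub>m n" "X \<in> carrier_mat n n"
  shows "P\<^sup>T * (Q\<^sup>T * X * Q) * P = X"
proof -
  have "P\<^sup>T * Q\<^sup>T = 1\<^sub>m n" using transpose_mult[of Q n n P n] assms by simp
  then have "P\<^sup>T * (Q\<^sup>T * X) = X" using assoc_mult_mat[of "P\<^sup>T" n n "Q\<^sup>T" n X n] assms by simp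
  moreover have "P\<^sup>T * (Q\<^sup>T * X * Q) * P = P\<^sup>T * (Q\<^sup>T * X * Q * P)"
    by (rule assoc_mult_mat) (use assms in auto)
  moreover have "Q\<^sup>T * X * Q * P = Q\<^sup>T * X"
    using assoc_mult_mat[of "Q\<^sup>T * X" n n Q n P n] assms by simp
  ultimately show ?thesis by simp
qed

lemma det_upper_triangular_ne_0:
  assumes "N \<in> carrier_mat m m" "upper_triangular N" "\<And>i. i < m \<Longrightarrow> N $$ (i, i) \<noteq> 0"
  shows "det (N :: complex mat) \<noteq> 0"
  using assms by (auto simp: det_upper_triangular diag_mat_def prod_list_zero_iff)

lemma det_skew_blk: 
  assumes N: "N \<in> carrier_mat m m"
  shows "det (skew_blk N) = det N ^ 2"
proof -
  have "det (skew_blk N) = det (0\<^sub>m m m * 0\<^sub>m m m - N * (- N\<^sup>T))"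
    unfolding skew_blk_def using N by (subst det_four_block_mat[of _ m]) auto
  also have "0\<^sub>m m m * 0\<^sub>m m m - N * (- N\<^sup>T) = N * N\<^sup>T"
    using N by (intro eq_matI) auto
  also have "det (N * N\<^sup>T) = det N ^ 2"
    using N by (simp add: det_mult[of _ m] det_transpose power2_eq_square)
  finally show ?thesis .
qed

lemma kernel_trivial_if_extends_invertible:
  fixes N' :: "complex mat"
  assumes N': "N' \<in> carrier_mat k k" "det N' \<noteq> 0" and k: "k \<ge> 1"
    and last_row: "\<And>j. j < k \<Longrightarrow> N' $$ (k - 1, j) = (if j = k - 1 then 1 else 0)"
    and y: "y \<in> carrier_vec (k - 1)" and z: "z \<in> carrier_vec k"
    and rows: "\<And>i. i < k - 1 \<Longrightarrow> (\<Sum>j = 0..<k. N' $$ (i, j) * z $ j) = 0"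
    and cols: "\<And>t. t < k \<Longrightarrow> (\<Sum>i = 0..<k - 1. N' $$ (i, t) * y $ i) = (if t = k - 1 then z $ (k - 1) else 0)"
  shows "y = 0\<^sub>v (k - 1) \<and> z = 0\<^sub>v k"
proof -
  define y' where "y' = vec k (\<lambda>i. if i < k - 1 then y $ i else - z $ (k - 1))"
  have "N'\<^sup>T *\<^sub>v y' = 0\<^sub>v k"
  proof (rule eq_vecI)
    fix t assume "t < dim_vec (0\<^sub>v k :: complex vec)"
    then have t: "t < k" by simp
    have "{0..<k} = insert (k - 1) {0..<k - 1}" using k by auto
    then have "(N'\<^sup>T *\<^sub>v y') $ t = (\<Sum>i = 0..<k - 1. N' $$ (i, t) * y $ i) - N' $$ (k - 1, t) * z $ (k - 1)"
      using t N' by (simp add: scalar_prod_def y'_def sum.cong[OF refl, of "{0..<k - 1}"])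
    then show "(N'\<^sup>T *\<^sub>v y') $ t = 0\<^sub>v k $ t" using cols[OF t] last_row[OF t] t by simp
  qed (use N' in simp)
  moreover have "det N'\<^sup>T \<noteq> 0" using N' by (simp add: det_transpose)
  moreover have "y' \<in> carrier_vec k" by (simp add: y'_def)
  ultimately have y'0: "y' = 0\<^sub>v k" using det_0_iff_vec_prod_zero[of "N'\<^sup>T" k] N' by auto
  have y0: "y $ i = 0" if "i < k - 1" for i
    using that arg_cong[OF y'0, of "\<lambda>v. v $ i"] by (simp add: y'_def)
  have zk: "z $ (k - 1) = 0"
    using arg_cong[OF y'0, of "\<lambda>v. v $ (k - 1)"] k by (simp add: y'_def)
  have "N' *\<^sub>v z = 0\<^sub>v k"
  proof (rule eq_vecI)
    fix i assume "i < dim_vec (0\<^sub>v k :: complex vec)"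
    then have i: "i < k" by simp
    have "(N' *\<^sub>v z) $ i = (\<Sum>j = 0..<k. N' $$ (i, j) * z $ j)" using i N' z by (simp add: scalar_prod_def)
    also have "\<dots> = 0"
    proof (cases "i = k - 1")
      case True
      then have "(\<Sum>j = 0..<k. N' $$ (i, j) * z $ j) = (\<Sum>j = 0..<k. if j = k - 1 then z $ j else 0)"
        using last_row by (intro sum.cong) auto
      then show ?thesis using zk k by simp
    qed (use rows i in simp)
    finally show "(N' *\<^sub>v z) $ i = 0\<^sub>v k $ i" using i by simp
  qed (use N' in simp)
  then have "z = 0\<^sub>v k" using det_0_iff_vec_prod_zero[OF N'(1)] N'(2) z by auto
  moreover have "y = 0\<^sub>v (k - 1)" using y0 y by (intro eq_vecI) auto
  ultimately show ?thesis by simp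
qed

text \<open>This is the pencil of a Kronecker block plus a rank-one perturbation. It is invertible
  because the off-diagonal block N extends, by the row e_(k-1), to an invertible square matrix N'.\<close>
lemma det_bordered_skew_blk_ne_0:
  assumes N': "N' \<in> carrier_mat k k" "det N' \<noteq> 0" and k: "k \<ge> 1"
    and last_row: "\<And>j. j < k \<Longrightarrow> N' $$ (k - 1, j) = (if j = k - 1 then 1 else 0)"
  defines "N \<equiv> mat (k - 1) k (\<lambda>(i, j). N' $$ (i, j))"
    and "E \<equiv> mat k k (\<lambda>(i, j). if i = k - 1 \<and> j = k - 1 then 1 else (0::complex))"
  shows "det (four_block_mat (0\<^sub>m (k - 1) (k - 1)) N (- N\<^sup>T) E) \<noteq> 0"
proof
  let ?M = "four_block_mat (0\<^sub>m (k - 1) (k - 1)) N (- N\<^sup>T) E"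
  have N: "N \<in> carrier_mat (k - 1) k" and E: "E \<in> carrier_mat k k" by (simp_all add: N_def E_def)
  then have M: "?M \<in> carrier_mat (k - 1 + k) (k - 1 + k)" by simp
  assume "det ?M = 0"
  then obtain v where v: "v \<in> carrier_vec (k - 1 + k)" "v \<noteq> 0\<^sub>v (k - 1 + k)" "?M *\<^sub>v v = 0\<^sub>v (k - 1 + k)"
    using det_0_iff_vec_prod_zero[OF M] by blast
  define y where "y = vec_first v (k - 1)"
  define z where "z = vec_last v k"
  have y: "y \<in> carrier_vec (k - 1)" and z: "z \<in> carrier_vec k" by (simp_all add: y_def z_def)
  have vyz: "v = y @\<^sub>v z" using v(1) by (simp add: y_def z_def)
  have "(0\<^sub>m (k - 1) (k - 1) *\<^sub>v y + N *\<^sub>v z) @\<^sub>v (- N\<^sup>T *\<^sub>v y + E *\<^sub>v z) = 0\<^sub>v (k - 1) @\<^sub>v 0\<^sub>v k"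
    using v(3) N E y z four_block_mat_mult_vec[of "0\<^sub>m (k - 1) (k - 1)" "k - 1" "k - 1" N k "- N\<^sup>T" k E y z]
    by (simp add: vyz append_zero_vec)
  then have "N *\<^sub>v z = 0\<^sub>v (k - 1) \<and> - N\<^sup>T *\<^sub>v y + E *\<^sub>v z = 0\<^sub>v k"
    using N y z by (subst (asm) append_vec_eq[where n = "k - 1"]) (auto simp: zero_mat_mult_vec)
  then have Nz: "N *\<^sub>v z = 0\<^sub>v (k - 1)" and NTy: "- N\<^sup>T *\<^sub>v y + E *\<^sub>v z = 0\<^sub>v k" by auto
  have "(\<Sum>j = 0..<k. N' $$ (i, j) * z $ j) = 0" if i: "i < k - 1" for i
    using arg_cong[OF Nz, of "\<lambda>w. w $ i"] i z by (simp add: N_def scalar_prod_def)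
  moreover have "(\<Sum>i = 0..<k - 1. N' $$ (i, t) * y $ i) = (if t = k - 1 then z $ (k - 1) else 0)"
    if t: "t < k" for t
  proof -
    have "(- N\<^sup>T *\<^sub>v y + E *\<^sub>v z) $ t = 0" using NTy t by simp
    then have "(N\<^sup>T *\<^sub>v y) $ t = (E *\<^sub>v z) $ t" using t N y z E by simp
    moreover have "(N\<^sup>T *\<^sub>v y) $ t = (\<Sum>i = 0..<k - 1. N' $$ (i, t) * y $ i)"
      using t y by (simp add: N_def scalar_prod_def)
    moreover have "(E *\<^sub>v z) $ t = (\<Sum>j = 0..<k. (if t = k - 1 \<and> j = k - 1 then 1 else 0) * z $ j)"
      using t z by (simp add: E_def scalar_prod_def)
    moreover have "\<dots> = (\<Sum>j = 0..<k. if j = k - 1 then (if t = k - 1 then z $ j else 0) else 0)"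
      by (rule sum.cong) auto
    ultimately show ?thesis using k by simp
  qed
  ultimately have "y = 0\<^sub>v (k - 1) \<and> z = 0\<^sub>v k"
    using kernel_trivial_if_extends_invertible[OF N' k last_row y z] by blast
  then show False using v(2) by (simp add: vyz append_zero_vec)
qed

section \<open>Pencils of Jordan--Kronecker blocks\<close>

fun offdiagA :: "jkblock \<Rightarrow> complex mat" where
  "offdiagA (Kron k) = kron_P k"
| "offdiagA (Jord \<mu> m) = jordan_block m \<mu>"
| "offdiagA (JordInf m) = 1\<^sub>m m"

fun offdiagB :: "jkblock \<Rightarrow> complex mat" where
  "offdiagB (Kron k) = kron_Q k"
| "offdiagB (Jord \<mu> m) = 1\<^sub>m m"
| "offdiagB (JordInf m) = jordan_block m 0"

fun offdiag_rows :: "jkblock \<Rightarrow> nat" where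
  "offdiag_rows (Kron k) = k - 1"
| "offdiag_rows (Jord \<mu> m) = m"
| "offdiag_rows (JordInf m) = m"

fun offdiag_cols :: "jkblock \<Rightarrow> nat" where
  "offdiag_cols (Kron k) = k"
| "offdiag_cols (Jord \<mu> m) = m"
| "offdiag_cols (JordInf m) = m"

definition blk_dim :: "jkblock \<Rightarrow> nat" where
  "blk_dim b = offdiag_rows b + offdiag_cols b"

lemma offdiagA_carrier: "offdiagA b \<in> carrier_mat (offdiag_rows b) (offdiag_cols b)"
  by (cases b) (auto simp: kron_P_def)

lemma offdiagB_carrier: "offdiagB b \<in> carrier_mat (offdiag_rows b) (offdiag_cols b)"
  by (cases b) (auto simp: kron_Q_def)

lemma skew_blk_carrier: "M \<in> carrier_mat r c \<Longrightarrow> skew_blk M \<in> carrier_mat (r + c) (r + c)"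
  by (simp add: skew_blk_def)

lemma blkA_carrier: "blkA b \<in> carrier_mat (blk_dim b) (blk_dim b)"
  using skew_blk_carrier[OF offdiagA_carrier[of b]] by (cases b) (auto simp: blk_dim_def)

lemma blkB_carrier: "blkB b \<in> carrier_mat (blk_dim b) (blk_dim b)"
  using skew_blk_carrier[OF offdiagB_carrier[of b]] by (cases b) (auto simp: blk_dim_def)

definition blk_pencil :: "complex \<Rightarrow> complex \<Rightarrow> jkblock \<Rightarrow> complex mat" where
  "blk_pencil \<alpha> \<beta> b = skew_blk (\<alpha> \<cdot>\<^sub>m offdiagA b + \<beta> \<cdot>\<^sub>m offdiagB b)"

lemma blk_pencil_carrier: "blk_pencil \<alpha> \<beta> b \<in> carrier_mat (blk_dim b) (blk_dim b)"
  unfolding blk_pencil_def blk_dim_def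
  using offdiagA_carrier[of b] offdiagB_carrier[of b] by (intro skew_blk_carrier) auto

lemma blk_pencil_eq: "\<alpha> \<cdot>\<^sub>m blkA b + \<beta> \<cdot>\<^sub>m blkB b = blk_pencil \<alpha> \<beta> b"
proof -
  have "blkA b = skew_blk (offdiagA b)" "blkB b = skew_blk (offdiagB b)" by (cases b; simp)+
  then show ?thesis
    using offdiagA_carrier[of b] offdiagB_carrier[of b]
    by (intro eq_matI) (auto simp: blk_pencil_def skew_blk_def)
qed

lemma JK_decomp_congruence:
  assumes JK: "JK_decomp A B bl" and A: "A \<in> carrier_mat n n" and B: "B \<in> carrier_mat n n"
  obtains P Q where "P \<in> carrier_mat n n" "Q \<in> carrier_mat n n" "Q * P = 1\<^sub>m n"
    and "\<And>\<alpha> \<beta>. P\<^sup>T * (\<alpha> \<cdot>\<^sub>m A + \<beta> \<cdot>\<^sub>m B) * P = blkdiag (map (blk_pencil \<alpha> \<beta>) bl)"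
proof -
  obtain P where P: "P \<in> carrier_mat n n" "invertible_mat P"
    and PA: "P\<^sup>T * A * P = blkdiag (map blkA bl)" and PB: "P\<^sup>T * B * P = blkdiag (map blkB bl)"
    using JK A unfolding JK_decomp_def by auto
  obtain Q where "Q \<in> carrier_mat n n" "Q * P = 1\<^sub>m n"
    using invertible_mat_inverse[OF P(2,1)] by blast
  moreover have "P\<^sup>T * (\<alpha> \<cdot>\<^sub>m A + \<beta> \<cdot>\<^sub>m B) * P = blkdiag (map (blk_pencil \<alpha> \<beta>) bl)" for \<alpha> \<beta>
  proof -
    have "P\<^sup>T * (\<alpha> \<cdot>\<^sub>m A + \<beta> \<cdot>\<^sub>m B) * P = \<alpha> \<cdot>\<^sub>m (P\<^sup>T * A * P) + \<beta> \<cdot>\<^sub>m (P\<^sup>T * B * P)"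
      using A B P(1) by (simp add: congruence_add[of P n] mult_smult_distrib[of _ n n _ n]
          mult_smult_assoc_mat[of _ n n _ n])
    also have "\<dots> = blkdiag (map (\<lambda>b. \<alpha> \<cdot>\<^sub>m blkA b) bl) + blkdiag (map (\<lambda>b. \<beta> \<cdot>\<^sub>m blkB b) bl)"
      unfolding PA PB blkdiag_smult by (simp add: o_def)
    also have "\<dots> = blkdiag (map (blk_pencil \<alpha> \<beta>) bl)"
      using blkA_carrier blkB_carrier
      by (subst blkdiag_map_add[where r = blk_dim and c = blk_dim]) (auto simp: blk_pencil_eq)
    finally show ?thesis .
  qed
  ultimately show ?thesis using that P(1) by blast
qed

definition pencil_singular :: "complex \<Rightarrow> complex \<Rightarrow> jkblock \<Rightarrow> bool" where
  "pencil_singular \<alpha> \<beta> b \<longleftrightarrow>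
     (case b of Kron k \<Rightarrow> False | Jord \<mu> m \<Rightarrow> \<alpha> * \<mu> + \<beta> = 0 | JordInf m \<Rightarrow> \<alpha> = 0)"

definition pencil_nullity :: "complex \<Rightarrow> complex \<Rightarrow> jkblock \<Rightarrow> nat" where
  "pencil_nullity \<alpha> \<beta> b = (case b of Kron k \<Rightarrow> 1 | _ \<Rightarrow> if pencil_singular \<alpha> \<beta> b then 2 else 0)"

definition kron_count :: "jkblock \<Rightarrow> nat" where
  "kron_count b = (case b of Kron k \<Rightarrow> 1 | _ \<Rightarrow> 0)"

lemma size_kron_inv: "size (kron_inv bl) = (\<Sum>b\<leftarrow>bl. kron_count b)"
  unfolding kron_inv_def
proof (induction bl)
  case (Cons b bl) then show ?case by (cases b) (auto simp: kron_count_def)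
qed simp

lemma kron_count_less_nullity:
  assumes "b \<in> set bl" "pencil_singular \<alpha> \<beta> b"
  shows "(\<Sum>b\<leftarrow>bl. kron_count b) < (\<Sum>b\<leftarrow>bl. pencil_nullity \<alpha> \<beta> b)"
  using assms
proof (induction bl)
  case (Cons b' bl)
  have le: "kron_count x \<le> pencil_nullity \<alpha> \<beta> x" for x
    by (cases x) (auto simp: kron_count_def pencil_nullity_def)
  have "pencil_singular \<alpha> \<beta> b' \<Longrightarrow> kron_count b' < pencil_nullity \<alpha> \<beta> b'"
    by (cases b') (auto simp: kron_count_def pencil_nullity_def pencil_singular_def)
  then show ?case
    using Cons le[of b'] sum_list_mono[of bl kron_count "pencil_nullity \<alpha> \<beta>", OF le]
    by (auto simp: add_le_less_mono add_less_le_mono)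
qed simp

lemma skew_blk_null_frame:
  assumes N: "N \<in> carrier_mat m m" and "m \<ge> 1"
    and col0: "\<And>i. i < m \<Longrightarrow> N $$ (i, 0) = 0" and row_last: "\<And>j. j < m \<Longrightarrow> N $$ (m - 1, j) = 0"
  shows "\<exists>W L. null_frame (skew_blk N) 2 W L"
proof -
  define g :: "nat \<Rightarrow> nat" where "g j = (if j = 0 then m else m - 1)" for j
  have "inj_on g {..<2}" "g ` {..<2} \<subseteq> {..<m + m}" using \<open>m \<ge> 1\<close> by (auto simp: g_def inj_on_def)
  moreover have "skew_blk N $$ (i, g j) = 0" if "i < m + m" "j < 2" for i j
    using that N col0 row_last by (auto simp: skew_blk_def g_def)
  ultimately show ?thesis
    using null_frame_zero_columns[of "skew_blk N" "m + m" g 2] skew_blk_carrier[OF N] by blast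
qed

lemma kron_pencil_mult_vec:
  assumes "i < k - 1" "z \<in> carrier_vec k"
  shows "((\<alpha> \<cdot>\<^sub>m kron_P k + \<beta> \<cdot>\<^sub>m kron_Q k) *\<^sub>v z) $ i = \<alpha> * z $ i + \<beta> * z $ Suc i"
proof -
  have "((\<alpha> \<cdot>\<^sub>m kron_P k + \<beta> \<cdot>\<^sub>m kron_Q k) *\<^sub>v z) $ i =
      (\<Sum>t = 0..<k. (if t = i then \<alpha> * z $ t else 0) + (if t = Suc i then \<beta> * z $ t else 0))"
    using assms by (auto simp: scalar_prod_def kron_P_def kron_Q_def intro!: sum.cong)
  also have "\<dots> = \<alpha> * z $ i + \<beta> * z $ Suc i" using assms by (auto simp: sum.distrib)
  finally show ?thesis .
qed

lemma kron_pencil_null_frame: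
  assumes "k \<ge> 1" "(\<alpha>, \<beta>) \<noteq> (0, 0)"
  shows "\<exists>W L. null_frame (blk_pencil \<alpha> \<beta> (Kron k)) 1 W L"
proof -
  define N where "N = \<alpha> \<cdot>\<^sub>m kron_P k + \<beta> \<cdot>\<^sub>m kron_Q k"
  \<comment> \<open>the geometric sequence solving \<alpha> z_i + \<beta> z_(i+1) = 0\<close>
  define z where "z = vec k (\<lambda>t. (-\<beta>) ^ (k - 1 - t) * \<alpha> ^ t)"
  have N: "N \<in> carrier_mat (k - 1) k" by (simp add: N_def kron_P_def kron_Q_def)
  have z: "z \<in> carrier_vec k" by (simp add: z_def)
  have "N *\<^sub>v z = 0\<^sub>v (k - 1)"
  proof (rule eq_vecI)
    fix i assume "i < dim_vec (0\<^sub>v (k - 1) :: complex vec)"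
    then have i: "i < k - 1" by simp
    then have "k - 1 - i = Suc (k - 1 - Suc i)" by simp
    then show "(N *\<^sub>v z) $ i = 0\<^sub>v (k - 1) $ i"
      using i kron_pencil_mult_vec[OF i z] by (simp add: N_def z_def)
  qed (use N in simp)
  moreover have "z \<noteq> 0\<^sub>v k"
  proof
    assume z0: "z = 0\<^sub>v k"
    show False
    proof (cases "\<alpha> = 0")
      case True
      have "(-\<beta>) ^ (k - 1) = z $ 0" using assms(1) by (simp add: z_def True)
      also have "\<dots> = 0" using z0 assms(1) by simp
      finally show False using True assms(2) by simp
    next
      case False
      have "\<alpha> ^ (k - 1) = z $ (k - 1)" using assms(1) by (simp add: z_def)
      also have "\<dots> = 0" using z0 assms(1) by simp
      finally show False using False by simp
    qed
  qed
  moreover have "skew_blk N *\<^sub>v (0\<^sub>v (k - 1) @\<^sub>v z) =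
      (0\<^sub>m (k - 1) (k - 1) *\<^sub>v 0\<^sub>v (k - 1) + N *\<^sub>v z) @\<^sub>v (- N\<^sup>T *\<^sub>v 0\<^sub>v (k - 1) + 0\<^sub>m k k *\<^sub>v z)"
    unfolding skew_blk_def using N z by (subst four_block_mat_mult_vec) auto
  ultimately have "skew_blk N *\<^sub>v (0\<^sub>v (k - 1) @\<^sub>v z) = 0\<^sub>v (k - 1 + k)" "0\<^sub>v (k - 1) @\<^sub>v z \<noteq> 0\<^sub>v (k - 1 + k)"
    using N z append_vec_eq[of "0\<^sub>v (k - 1)" "k - 1" "0\<^sub>v (k - 1)" z "0\<^sub>v k"]
    by (auto simp: zero_mat_mult_vec mat_mult_zero_vec simp flip: append_zero_vec)
  then show ?thesis
    unfolding blk_pencil_def offdiagA.simps offdiagB.simps N_def[symmetric]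
    using z by (intro null_frame_vector[OF skew_blk_carrier[OF N], of "0\<^sub>v (k - 1) @\<^sub>v z"]) auto
qed

lemma blk_pencil_null_frame:
  assumes "jk_valid b" "(\<alpha>, \<beta>) \<noteq> (0, 0)"
  shows "\<exists>W L. null_frame (blk_pencil \<alpha> \<beta> b) (pencil_nullity \<alpha> \<beta> b) W L"
proof (cases "pencil_singular \<alpha> \<beta> b")
  case False
  then show ?thesis
    using kron_pencil_null_frame[of _ \<alpha> \<beta>] assms null_frame_empty[of "blk_pencil \<alpha> \<beta> b"]
    by (cases b) (auto simp: pencil_nullity_def)
next
  case True
  define N where "N = \<alpha> \<cdot>\<^sub>m offdiagA b + \<beta> \<cdot>\<^sub>m offdiagB b"
  define m where "m = offdiag_rows b"
  have "N \<in> carrier_mat m m" "m \<ge> 1"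
    "\<And>i. i < m \<Longrightarrow> N $$ (i, 0) = 0" "\<And>j. j < m \<Longrightarrow> N $$ (m - 1, j) = 0"
    using True assms(1) by (cases b; force simp: N_def m_def pencil_singular_def)+
  then show ?thesis
    using skew_blk_null_frame True unfolding blk_pencil_def N_def[symmetric]
    by (cases b) (auto simp: pencil_nullity_def pencil_singular_def)
qed

lemma det_pencil_add_rank_at_most_eq_0:
  assumes JK: "JK_decomp A B bl" and A: "A \<in> carrier_mat n n" and B: "B \<in> carrier_mat n n"
    and ab: "(\<alpha>, \<beta>) \<noteq> (0, 0)" and sing: "b \<in> set bl" "pencil_singular \<alpha> \<beta> b"
    and C: "rank_at_most n (size (kron_inv bl)) C"
  shows "det (\<alpha> \<cdot>\<^sub>m A + \<beta> \<cdot>\<^sub>m B + C) = 0"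
proof -
  obtain P Q where P: "P \<in> carrier_mat n n" and Q: "Q \<in> carrier_mat n n" and QP: "Q * P = 1\<^sub>m n"
    and cong: "P\<^sup>T * (\<alpha> \<cdot>\<^sub>m A + \<beta> \<cdot>\<^sub>m B) * P = blkdiag (map (blk_pencil \<alpha> \<beta>) bl)"
    using JK_decomp_congruence[OF JK A B] by metis
  let ?M = "\<alpha> \<cdot>\<^sub>m A + \<beta> \<cdot>\<^sub>m B" and ?D = "blkdiag (map (blk_pencil \<alpha> \<beta>) bl)"
  have M: "?M \<in> carrier_mat n n" using A B by simp
  then have D: "?D \<in> carrier_mat n n" using P by (simp flip: cong)
  have "\<forall>b\<in>set bl. \<exists>W L. null_frame (blk_pencil \<alpha> \<beta> b) (pencil_nullity \<alpha> \<beta> b) W L"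
    using blk_pencil_null_frame JK ab unfolding JK_decomp_def by blast
  then obtain W L where "\<And>b. b \<in> set bl \<Longrightarrow> null_frame (blk_pencil \<alpha> \<beta> b) (pencil_nullity \<alpha> \<beta> b) (W b) (L b)"
    by metis
  then have "null_frame ?D (\<Sum>b\<leftarrow>bl. pencil_nullity \<alpha> \<beta> b) (blkdiag (map W bl)) (blkdiag (map L bl))"
    using blk_pencil_carrier by (intro null_frame_blkdiag) auto
  then have "det (?D + P\<^sup>T * C * P) = 0"
    using det_add_rank_at_most_eq_0[OF D _ rank_at_most_congruence[OF C P]]
      kron_count_less_nullity[OF sing] by (simp add: size_kron_inv)
  also have "?D + P\<^sup>T * C * P = P\<^sup>T * (?M + C) * P"
    using congruence_add[OF P M rank_at_most_carrier[OF C]] cong by simp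
  finally have "det P ^ 2 * det (?M + C) = 0"
    using det_congruence[OF P] M rank_at_most_carrier[OF C] by simp
  then show ?thesis using det_ne_0_if_left_inverse[OF P Q QP] by simp
qed

text \<open>The last basis vector of a Kronecker block, whose rank-one square makes the pencil of that
  block invertible; Jordan blocks get no column, as away from their eigenvalue they are invertible
  already.\<close>
definition kron_border :: "jkblock \<Rightarrow> complex mat" where
  "kron_border b = mat (blk_dim b) (kron_count b) (\<lambda>(i, _). if i = blk_dim b - 1 then 1 else 0)"

lemma kron_border_carrier: "kron_border b \<in> carrier_mat (blk_dim b) (kron_count b)"
  by (simp add: kron_border_def)

lemma blk_pencil_border_det_ne_0:
  assumes "jk_valid b" and "\<And>m. b \<noteq> Jord \<nu> m"
  shows "det (blk_pencil 1 (-\<nu>) b + kron_border b * (kron_border b)\<^sup>T) \<noteq> 0"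
proof (cases b)
  case (Kron k)
  have k: "k \<ge> 1" using assms Kron by simp
  define N' :: "complex mat" where
    "N' = mat k k (\<lambda>(i, j). if j = i then 1 else if j = Suc i then -\<nu> else 0)"
  have N': "N' \<in> carrier_mat k k" by (simp add: N'_def)
  have det: "det N' \<noteq> 0"
    by (rule det_upper_triangular_ne_0[OF N']) (auto simp: N'_def upper_triangular_def)
  have last_row: "\<And>j. j < k \<Longrightarrow> N' $$ (k - 1, j) = (if j = k - 1 then 1 else 0)"
    using k by (auto simp: N'_def)
  define N where "N = mat (k - 1) k (\<lambda>(i, j). N' $$ (i, j))"
  have "blk_pencil 1 (-\<nu>) b = skew_blk N"
    unfolding Kron blk_pencil_def offdiagA.simps offdiagB.simps
    by (rule arg_cong[where f = skew_blk], rule eq_matI) (auto simp: kron_P_def kron_Q_def N_def N'_def)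
  moreover have "kron_border b * (kron_border b)\<^sup>T =
      mat (k - 1 + k) (k - 1 + k) (\<lambda>(i, j). if i = k - 1 + k - 1 \<and> j = k - 1 + k - 1 then 1 else 0)"
    by (intro eq_matI) (auto simp: Kron kron_border_def kron_count_def blk_dim_def scalar_prod_def)
  ultimately have "blk_pencil 1 (-\<nu>) b + kron_border b * (kron_border b)\<^sup>T =
      four_block_mat (0\<^sub>m (k - 1) (k - 1)) N (- N\<^sup>T) (mat k k (\<lambda>(i, j). if i = k - 1 \<and> j = k - 1 then 1 else 0))"
    using k by (intro eq_matI) (auto simp: skew_blk_def N_def)
  then show ?thesis using det_bordered_skew_blk_ne_0[OF N' det k last_row] by (simp add: N_def)
next
  case (Jord \<mu> m)
  define N where "N = 1 \<cdot>\<^sub>m jordan_block m \<mu> + (-\<nu>) \<cdot>\<^sub>m 1\<^sub>m m"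
  have N: "N \<in> carrier_mat m m" by (simp add: N_def)
  have "kron_border b * (kron_border b)\<^sup>T = 0\<^sub>m (m + m) (m + m)"
    by (intro eq_matI) (auto simp: Jord kron_border_def kron_count_def blk_dim_def scalar_prod_def)
  then have "blk_pencil 1 (-\<nu>) b + kron_border b * (kron_border b)\<^sup>T = skew_blk N"
    using skew_blk_carrier[OF N] by (simp add: Jord blk_pencil_def N_def)
  moreover have "det N \<noteq> 0"
    by (rule det_upper_triangular_ne_0[OF N]) (use assms Jord in \<open>auto simp: N_def upper_triangular_def\<close>)
  ultimately show ?thesis using det_skew_blk[OF N] by simp
next
  case (JordInf m)
  define N where "N = 1 \<cdot>\<^sub>m 1\<^sub>m m + (-\<nu>) \<cdot>\<^sub>m jordan_block m 0"
  have N: "N \<in> carrier_mat m m" by (simp add: N_def)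
  have "kron_border b * (kron_border b)\<^sup>T = 0\<^sub>m (m + m) (m + m)"
    by (intro eq_matI) (auto simp: JordInf kron_border_def kron_count_def blk_dim_def scalar_prod_def)
  then have "blk_pencil 1 (-\<nu>) b + kron_border b * (kron_border b)\<^sup>T = skew_blk N"
    using skew_blk_carrier[OF N] by (simp add: JordInf blk_pencil_def N_def)
  moreover have "det N \<noteq> 0"
    by (rule det_upper_triangular_ne_0[OF N]) (auto simp: N_def upper_triangular_def)
  ultimately show ?thesis using det_skew_blk[OF N] by simp
qed

lemma blkdiag_pencil_border_det_ne_0:
  assumes "\<forall>b\<in>set bl. jk_valid b" and "\<And>m. Jord \<nu> m \<notin> set bl"
  shows "det (blkdiag (map (blk_pencil 1 (-\<nu>)) bl) +
    blkdiag (map kron_border bl) * blkdiag (map (\<lambda>b. (kron_border b)\<^sup>T) bl)) \<noteq> 0"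
proof -
  let ?E = "\<lambda>b. kron_border b * (kron_border b)\<^sup>T"
  have E: "?E b \<in> carrier_mat (blk_dim b) (blk_dim b)" for b
    using kron_border_carrier[of b] by simp
  have "blkdiag (map kron_border bl) * blkdiag (map (\<lambda>b. (kron_border b)\<^sup>T) bl) = blkdiag (map ?E bl)"
    by (rule blkdiag_map_mult) (simp add: kron_border_def)
  also have "blkdiag (map (blk_pencil 1 (-\<nu>)) bl) + \<dots> =
      blkdiag (map (\<lambda>b. blk_pencil 1 (-\<nu>) b + ?E b) bl)"
    using blk_pencil_carrier E by (intro blkdiag_map_add[where r = blk_dim and c = blk_dim]) blast
  finally have DE: "blkdiag (map (blk_pencil 1 (-\<nu>)) bl) +
      blkdiag (map kron_border bl) * blkdiag (map (\<lambda>b. (kron_border b)\<^sup>T) bl) =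
      blkdiag (map (\<lambda>b. blk_pencil 1 (-\<nu>) b + ?E b) bl)" .
  have "det (blkdiag (map (\<lambda>b. blk_pencil 1 (-\<nu>) b + ?E b) bl)) =
      prod_list (map det (map (\<lambda>b. blk_pencil 1 (-\<nu>) b + ?E b) bl))"
    using blk_pencil_carrier E by (intro blkdiag_det) auto
  moreover have "det (blk_pencil 1 (-\<nu>) b + ?E b) \<noteq> 0" if "b \<in> set bl" for b
    by (intro blk_pencil_border_det_ne_0) (use assms that in auto)
  ultimately show ?thesis unfolding DE by (auto simp: prod_list_zero_iff)
qed

lemma det_pencil_add_rank_at_most_ne_0:
  assumes JK: "JK_decomp A B bl" and A: "A \<in> carrier_mat n n" and B: "B \<in> carrier_mat n n"
    and not_ev: "\<And>m. Jord \<nu> m \<notin> set bl"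
  shows "\<exists>C. rank_at_most n (size (kron_inv bl)) C \<and> det (A + (-\<nu>) \<cdot>\<^sub>m B + C) \<noteq> 0"
proof -
  obtain P Q where P: "P \<in> carrier_mat n n" and Q: "Q \<in> carrier_mat n n" and QP: "Q * P = 1\<^sub>m n"
    and cong: "P\<^sup>T * (1 \<cdot>\<^sub>m A + (-\<nu>) \<cdot>\<^sub>m B) * P = blkdiag (map (blk_pencil 1 (-\<nu>)) bl)"
    using JK_decomp_congruence[OF JK A B] by metis
  let ?M = "A + (-\<nu>) \<cdot>\<^sub>m B" and ?D = "blkdiag (map (blk_pencil 1 (-\<nu>)) bl)"
  have M: "?M \<in> carrier_mat n n" using A B by simp
  have "1 \<cdot>\<^sub>m A = A" using A by (intro eq_matI) auto
  then have PMP: "P\<^sup>T * ?M * P = ?D" using cong by simp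
  have D: "?D \<in> carrier_mat (\<Sum>b\<leftarrow>bl. blk_dim b) (\<Sum>b\<leftarrow>bl. blk_dim b)"
    using blk_pencil_carrier by (intro blkdiag_map_carrier)
  have "dim_row ?D = n" unfolding PMP[symmetric] using P by simp
  then have n: "n = (\<Sum>b\<leftarrow>bl. blk_dim b)" using carrier_matD(1)[OF D] by simp
  define G where "G = blkdiag (map kron_border bl)"
  define H where "H = blkdiag (map (\<lambda>b. (kron_border b)\<^sup>T) bl)"
  have G: "G \<in> carrier_mat n (size (kron_inv bl))"
    unfolding G_def n size_kron_inv using kron_border_carrier by (rule blkdiag_map_carrier)
  have H: "H \<in> carrier_mat (size (kron_inv bl)) n"
    unfolding H_def n size_kron_inv using kron_border_carrier
    by (intro blkdiag_map_carrier) (simp only: transpose_carrier_mat)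
  define C where "C = Q\<^sup>T * (G * H) * Q"
  have C: "rank_at_most n (size (kron_inv bl)) C"
    unfolding C_def using G H Q by (intro rank_at_most_congruence) (auto simp: rank_at_most_def)
  have "P\<^sup>T * C * P = G * H"
    unfolding C_def using G H by (intro congruence_cancel[OF P Q QP]) auto
  then have "P\<^sup>T * (?M + C) * P = ?D + G * H"
    using congruence_add[OF P M rank_at_most_carrier[OF C]] PMP by simp
  moreover have "det (?D + G * H) \<noteq> 0"
    unfolding G_def H_def using JK not_ev by (intro blkdiag_pencil_border_det_ne_0) (auto simp: JK_decomp_def)
  moreover have "det (P\<^sup>T * (?M + C) * P) = det P ^ 2 * det (?M + C)"
    using M rank_at_most_carrier[OF C] by (intro det_congruence[OF P]) simp
  ultimately show ?thesis using C by auto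
qed

section \<open>Direct sums\<close>

lemma sum_lessThan_add:
  fixes f :: "nat \<Rightarrow> 'a::comm_monoid_add"
  shows "(\<Sum>k<a + b. f k) = (\<Sum>k<a. f k) + (\<Sum>k<b. f (a + k))"
  by (induction b) (auto simp: add.assoc)

lemma coadj_form_carrier: "coadj_form n c x \<in> carrier_mat n n"
  by (simp add: coadj_form_def)

lemma coadj_form_dims [simp]: "dim_row (coadj_form n c x) = n" "dim_col (coadj_form n c x) = n"
  by (simp_all add: coadj_form_def)

lemma coadj_form_add_smult:
  assumes "dim_vec a = n"
  shows "coadj_form n c (x + t \<cdot>\<^sub>v a) = coadj_form n c x + t \<cdot>\<^sub>m coadj_form n c a"
  using assms
  by (intro eq_matI) (auto simp: coadj_form_def sum.distrib sum_distrib_left algebra_simps)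

lemma coadj_form_lie_dsum:
  "coadj_form (n1 + n2) (lie_dsum n1 c1 n2 c2) x =
   four_block_mat (coadj_form n1 c1 (vec_slice 0 n1 x)) (0\<^sub>m n1 n2) (0\<^sub>m n2 n1)
     (coadj_form n2 c2 (vec_slice n1 n2 x))"
proof (rule eq_matI)
  fix i j assume "i < dim_row (four_block_mat (coadj_form n1 c1 (vec_slice 0 n1 x)) (0\<^sub>m n1 n2) (0\<^sub>m n2 n1)
    (coadj_form n2 c2 (vec_slice n1 n2 x)))" "j < dim_col (four_block_mat (coadj_form n1 c1 (vec_slice 0 n1 x))
    (0\<^sub>m n1 n2) (0\<^sub>m n2 n1) (coadj_form n2 c2 (vec_slice n1 n2 x)))"
  then have ij: "i < n1 + n2" "j < n1 + n2" by (simp_all add: coadj_form_def)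
  let ?c = "lie_dsum n1 c1 n2 c2"
  have L: "coadj_form (n1 + n2) ?c x $$ (i, j) =
    (\<Sum>k<n1. x $ k * ?c i j k) + (\<Sum>k<n2. x $ (n1 + k) * ?c i j (n1 + k))"
    using ij by (simp add: coadj_form_def sum_lessThan_add)
  consider "i < n1" "j < n1" | "i < n1 \<longleftrightarrow> \<not> j < n1" | "\<not> i < n1" "\<not> j < n1" by blast
  then show "coadj_form (n1 + n2) ?c x $$ (i, j) = four_block_mat (coadj_form n1 c1 (vec_slice 0 n1 x))
    (0\<^sub>m n1 n2) (0\<^sub>m n2 n1) (coadj_form n2 c2 (vec_slice n1 n2 x)) $$ (i, j)"
  proof cases
    case 1
    then show ?thesis unfolding L using ij
      by (auto simp: coadj_form_def lie_dsum_def vec_slice_def intro!: sum.neutral)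
  next
    case 2
    then show ?thesis unfolding L using ij
      by (auto simp: coadj_form_def lie_dsum_def intro!: sum.neutral)
  next
    case 3
    then show ?thesis unfolding L using ij
      by (auto simp: coadj_form_def lie_dsum_def vec_slice_def intro!: sum.neutral sum.cong)
  qed
qed (simp_all add: coadj_form_def)

lemma congruence_four_block_diag:
  fixes P1 X1 :: "complex mat"
  assumes "P1 \<in> carrier_mat n1 n1" "X1 \<in> carrier_mat n1 n1" "P2 \<in> carrier_mat n2 n2" "X2 \<in> carrier_mat n2 n2"
  shows "(four_block_mat P1 (0\<^sub>m n1 n2) (0\<^sub>m n2 n1) P2)\<^sup>T * four_block_mat X1 (0\<^sub>m n1 n2) (0\<^sub>m n2 n1) X2
      * four_block_mat P1 (0\<^sub>m n1 n2) (0\<^sub>m n2 n1) P2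
    = four_block_mat (P1\<^sup>T * X1 * P1) (0\<^sub>m n1 n2) (0\<^sub>m n2 n1) (P2\<^sup>T * X2 * P2)"
proof -
  have "(four_block_mat P1 (0\<^sub>m n1 n2) (0\<^sub>m n2 n1) P2)\<^sup>T = four_block_mat P1\<^sup>T (0\<^sub>m n1 n2) (0\<^sub>m n2 n1) P2\<^sup>T"
    using assms by (subst transpose_four_block_mat) auto
  then show ?thesis
    using assms by (simp add: four_block_diag_mult[of _ n1 n1 _ n2 n2])
qed

lemma JK_decomp_four_block_diag:
  assumes J1: "JK_decomp A1 B1 bl1" and J2: "JK_decomp A2 B2 bl2"
    and A1: "A1 \<in> carrier_mat n1 n1" and B1: "B1 \<in> carrier_mat n1 n1"
    and A2: "A2 \<in> carrier_mat n2 n2" and B2: "B2 \<in> carrier_mat n2 n2"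
  shows "JK_decomp (four_block_mat A1 (0\<^sub>m n1 n2) (0\<^sub>m n2 n1) A2)
      (four_block_mat B1 (0\<^sub>m n1 n2) (0\<^sub>m n2 n1) B2) (bl1 @ bl2)"
proof -
  obtain P1 where P1: "P1 \<in> carrier_mat n1 n1" "invertible_mat P1"
    "P1\<^sup>T * A1 * P1 = blkdiag (map blkA bl1)" "P1\<^sup>T * B1 * P1 = blkdiag (map blkB bl1)"
    and v1: "\<forall>b\<in>set bl1. jk_valid b"
    using J1 A1 unfolding JK_decomp_def by auto
  obtain P2 where P2: "P2 \<in> carrier_mat n2 n2" "invertible_mat P2"
    "P2\<^sup>T * A2 * P2 = blkdiag (map blkA bl2)" "P2\<^sup>T * B2 * P2 = blkdiag (map blkB bl2)"
    and v2: "\<forall>b\<in>set bl2. jk_valid b"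
    using J2 A2 unfolding JK_decomp_def by auto
  obtain Q1 where Q1: "Q1 \<in> carrier_mat n1 n1" "P1 * Q1 = 1\<^sub>m n1" "Q1 * P1 = 1\<^sub>m n1"
    using invertible_mat_inverse[OF P1(2,1)] by blast
  obtain Q2 where Q2: "Q2 \<in> carrier_mat n2 n2" "P2 * Q2 = 1\<^sub>m n2" "Q2 * P2 = 1\<^sub>m n2"
    using invertible_mat_inverse[OF P2(2,1)] by blast
  define P where "P = four_block_mat P1 (0\<^sub>m n1 n2) (0\<^sub>m n2 n1) P2"
  define Q where "Q = four_block_mat Q1 (0\<^sub>m n1 n2) (0\<^sub>m n2 n1) Q2"
  have P: "P \<in> carrier_mat (n1 + n2) (n1 + n2)" and Q: "Q \<in> carrier_mat (n1 + n2) (n1 + n2)"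
    using P1 P2 Q1 Q2 by (simp_all add: P_def Q_def)
  have "P * Q = 1\<^sub>m (n1 + n2)" "Q * P = 1\<^sub>m (n1 + n2)"
    unfolding P_def Q_def using P1 P2 Q1 Q2 by (simp_all add: four_block_diag_mult[of _ n1 n1 _ n2 n2])
  then have "invertible_mat P"
    using P Q unfolding invertible_mat_def inverts_mat_def by auto
  moreover have "dim_row (blkdiag (map blkA bl1)) = n1" "dim_col (blkdiag (map blkA bl1)) = n1"
    "dim_row (blkdiag (map blkB bl1)) = n1" "dim_col (blkdiag (map blkB bl1)) = n1"
    "dim_row (blkdiag (map blkA bl2)) = n2" "dim_col (blkdiag (map blkA bl2)) = n2"
    "dim_row (blkdiag (map blkB bl2)) = n2" "dim_col (blkdiag (map blkB bl2)) = n2"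
    unfolding P1(3,4)[symmetric] P2(3,4)[symmetric] using P1(1) P2(1) A1 A2 B1 B2 by simp_all
  moreover have "P\<^sup>T * four_block_mat A1 (0\<^sub>m n1 n2) (0\<^sub>m n2 n1) A2 * P = blkdiag (map blkA (bl1 @ bl2))"
    and "P\<^sup>T * four_block_mat B1 (0\<^sub>m n1 n2) (0\<^sub>m n2 n1) B2 * P = blkdiag (map blkB (bl1 @ bl2))"
    using calculation(2-) unfolding P_def
    by (simp_all add: congruence_four_block_diag P1(1,3,4) P2(1,3,4) A1 A2 B1 B2 blkdiag_append)
  ultimately show ?thesis
    unfolding JK_decomp_def using P v1 v2 A1 A2 by (auto intro!: exI[of _ P])
qed

lemma map_filter_append: "List.map_filter f (xs @ ys) = List.map_filter f xs @ List.map_filter f ys"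
  by (induction xs) (auto split: option.split)

lemma set_map_filter: "set (List.map_filter f xs) = {y. \<exists>x\<in>set xs. f x = Some y}"
  by (induction xs) (auto split: option.split)

lemma kron_inv_append: "kron_inv (bl1 @ bl2) = kron_inv bl1 + kron_inv bl2"
  by (simp add: kron_inv_def map_filter_append)

lemma jord_inv_append:
  assumes "\<And>b1 b2. b1 \<in> set bl1 \<Longrightarrow> b2 \<in> set bl2 \<Longrightarrow> jord_ev b1 \<noteq> None \<Longrightarrow> jord_ev b1 \<noteq> jord_ev b2"
  shows "jord_inv (bl1 @ bl2) = jord_inv bl1 + jord_inv bl2"
proof -
  define E where "E bl = set (List.map_filter jord_ev bl)" for bl
  define T where "T bl e = mset (map jord_size (filter (\<lambda>b. jord_ev b = Some e) bl))" for bl e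
  have inv: "jord_inv bl = image_mset (T bl) (mset_set (E bl))" for bl
    unfolding jord_inv_def T_def E_def ..
  have disj: "E bl1 \<inter> E bl2 = {}" unfolding E_def set_map_filter using assms by fastforce
  have T1: "T (bl1 @ bl2) e = T bl1 e" if "e \<in> E bl1" for e
    using that disj unfolding E_def set_map_filter T_def by (force simp: filter_empty_conv)
  have T2: "T (bl1 @ bl2) e = T bl2 e" if "e \<in> E bl2" for e
    using that disj unfolding E_def set_map_filter T_def by (force simp: filter_empty_conv)
  have "jord_inv (bl1 @ bl2) = image_mset (T (bl1 @ bl2)) (mset_set (E bl1) + mset_set (E bl2))"
    using disj by (simp add: inv E_def map_filter_append mset_set_Union)
  also have "\<dots> = image_mset (T bl1) (mset_set (E bl1)) + image_mset (T bl2) (mset_set (E bl2))"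
    using T1 T2 unfolding image_mset_union by (intro arg_cong2[where f = "(+)"] image_mset_cong) (auto simp: E_def)
  finally show ?thesis by (simp add: inv)
qed

section \<open>Jordan--Kronecker types on basic open sets\<close>

definition JK_type_at :: "nat \<Rightarrow> (nat \<Rightarrow> nat \<Rightarrow> nat \<Rightarrow> complex) \<Rightarrow> complex vec \<times> complex vec \<Rightarrow>
    nat multiset \<Rightarrow> nat multiset multiset \<Rightarrow> bool" where
  "JK_type_at n c p K J \<longleftrightarrow> has_JK_type (coadj_form n c (fst p)) (coadj_form n c (snd p)) K J"

lemma JK_invariantsE:
  assumes "JK_invariants n c K J"
  obtains u where "u \<in> polyfun n" "\<exists>p\<in>pair_space n. u p \<noteq> 0"
    "\<And>p. p \<in> pair_space n \<Longrightarrow> u p \<noteq> 0 \<Longrightarrow> JK_type_at n c p K J"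
proof -
  obtain U where "zariski_open n U" "U \<noteq> {}" and T: "\<And>p. p \<in> U \<Longrightarrow> JK_type_at n c p K J"
    using assms unfolding JK_invariants_def JK_type_at_def by (auto simp: case_prod_beta)
  then obtain S where S: "S \<subseteq> polyfun n" "U = {p \<in> pair_space n. \<exists>f\<in>S. f p \<noteq> 0}"
    unfolding zariski_open_iff by blast
  then obtain u p where "u \<in> S" "p \<in> pair_space n" "u p \<noteq> 0" using \<open>U \<noteq> {}\<close> by blast
  then show thesis using that[of u] S T by blast
qed

lemma JK_invariantsI:
  assumes "\<And>h. h \<in> set hs \<Longrightarrow> h \<in> polyfun n \<and> (\<exists>p\<in>pair_space n. h p \<noteq> 0)"
    and "\<And>p. p \<in> pair_space n \<Longrightarrow> \<forall>h\<in>set hs. h p \<noteq> 0 \<Longrightarrow> JK_type_at n c p K J"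
  shows "JK_invariants n c K J"
proof -
  interpret polyfun: ring_of_functions "polyfun n" by (rule ring_of_functions_polyfun)
  let ?U = "{p \<in> pair_space n. \<exists>f\<in>{\<lambda>p. \<Prod>h\<leftarrow>hs. h p}. f p \<noteq> 0}"
  have "(\<lambda>p. \<Prod>h\<leftarrow>hs. h p) \<in> polyfun n" using assms(1) by (auto intro: polyfun.prod_list)
  then have "zariski_open n ?U" unfolding zariski_open_iff by blast
  moreover obtain p where "p \<in> pair_space n" "(\<Prod>h\<leftarrow>hs. h p) \<noteq> 0"
    using polyfun_prod_list_nonzero[OF assms(1)] by blast
  then have "p \<in> ?U" by simp
  then have "?U \<noteq> {}" by (rule ex_in_conv[THEN iffD1, OF exI])
  moreover have "JK_type_at n c p K J" if "p \<in> ?U" for p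
  proof -
    have "p \<in> pair_space n" "\<forall>h\<in>set hs. h p \<noteq> 0" using that by (auto simp: prod_list_zero_iff)
    then show ?thesis by (rule assms(2))
  qed
  ultimately show ?thesis unfolding JK_invariants_def JK_type_at_def by (auto simp: case_prod_beta)
qed

definition pencil_poly :: "complex mat \<Rightarrow> complex mat \<Rightarrow> complex mat \<Rightarrow> complex poly" where
  "pencil_poly A B C =
     det (mat (dim_row A) (dim_row A) (\<lambda>(i, j). [:A $$ (i, j) + C $$ (i, j), - B $$ (i, j):]))"

lemma poly_pencil_poly:
  assumes "A \<in> carrier_mat n n" "B \<in> carrier_mat n n" "C \<in> carrier_mat n n"
  shows "poly (pencil_poly A B C) \<mu> = det (A + (-\<mu>) \<cdot>\<^sub>m B + C)"
proof -
  have "poly (pencil_poly A B C) \<mu> =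
      det (map_mat (\<lambda>p. poly p \<mu>) (mat n n (\<lambda>(i, j). [:A $$ (i, j) + C $$ (i, j), - B $$ (i, j):])))"
    using assms(1) unfolding pencil_poly_def
    by (simp add: comm_ring_hom.hom_det[OF poly_hom.comm_ring_hom_axioms])
  also have "map_mat (\<lambda>p. poly p \<mu>) (mat n n (\<lambda>(i, j). [:A $$ (i, j) + C $$ (i, j), - B $$ (i, j):])) =
      A + (-\<mu>) \<cdot>\<^sub>m B + C"
    using assms by (intro eq_matI) (auto simp: algebra_simps)
  finally show ?thesis .
qed

lemma degree_pencil_poly: "degree (pencil_poly A B C) \<le> dim_row A"
proof -
  have "degree (pencil_poly A B C) \<le> 1 * dim_row A"
    unfolding pencil_poly_def by (rule degree_det_le) auto
  then show ?thesis by simp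
qed

lemma pencil_poly_shift:
  assumes "A \<in> carrier_mat n n" "B \<in> carrier_mat n n" "C \<in> carrier_mat n n"
  shows "pencil_poly (A + t \<cdot>\<^sub>m B) B C = pencil_poly A B C \<circ>\<^sub>p [:-t, 1:]"
proof -
  have "A + t \<cdot>\<^sub>m B + (-\<mu>) \<cdot>\<^sub>m B + C = A + (- (\<mu> - t)) \<cdot>\<^sub>m B + C" for \<mu>
    using assms by (intro eq_matI) (auto simp: algebra_simps)
  then have "poly (pencil_poly (A + t \<cdot>\<^sub>m B) B C) \<mu> = poly (pencil_poly A B C \<circ>\<^sub>p [:-t, 1:]) \<mu>" for \<mu>
    using assms by (simp add: poly_pencil_poly[of _ n] poly_pcompose)
  then have "poly (pencil_poly (A + t \<cdot>\<^sub>m B) B C) = poly (pencil_poly A B C \<circ>\<^sub>p [:-t, 1:])" ..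
  then show ?thesis by (simp add: poly_eq_poly_eq_iff)
qed

lemma pencil_poly_eigenvalue_root:
  assumes JK: "JK_decomp A B bl" and A: "A \<in> carrier_mat n n" and B: "B \<in> carrier_mat n n"
    and "Jord \<mu> m \<in> set bl" and C: "rank_at_most n (size (kron_inv bl)) C"
  shows "poly (pencil_poly A B C) \<mu> = 0"
proof -
  have "det (1 \<cdot>\<^sub>m A + (-\<mu>) \<cdot>\<^sub>m B + C) = 0"
    by (rule det_pencil_add_rank_at_most_eq_0[OF JK A B _ \<open>Jord \<mu> m \<in> set bl\<close> _ C])
      (auto simp: pencil_singular_def)
  moreover have "1 \<cdot>\<^sub>m A = A" using A by (intro eq_matI) auto
  ultimately show ?thesis using A B rank_at_most_carrier[OF C] by (simp add: poly_pencil_poly[of _ n])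
qed

lemma no_infinite_eigenvalue:
  assumes JK: "JK_decomp A B bl" and A: "A \<in> carrier_mat n n" and B: "B \<in> carrier_mat n n"
    and C: "rank_at_most n (size (kron_inv bl)) C" and "det (B + C) \<noteq> 0"
  shows "JordInf m \<notin> set bl"
proof
  assume "JordInf m \<in> set bl"
  then have "det (0 \<cdot>\<^sub>m A + 1 \<cdot>\<^sub>m B + C) = 0"
    by (intro det_pencil_add_rank_at_most_eq_0[OF JK A B _ _ _ C]) (auto simp: pencil_singular_def)
  moreover have "0 \<cdot>\<^sub>m A + 1 \<cdot>\<^sub>m B = B" using A B by (intro eq_matI) auto
  ultimately show False using \<open>det (B + C) \<noteq> 0\<close> by simp
qed

lemma exists_regular_perturbation:
  assumes "JK_invariants n c K J"
  obtains C y where "rank_at_most n (size K) C" "dim_vec y = n" "det (coadj_form n c y + C) \<noteq> 0"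
proof -
  obtain p where p: "p \<in> pair_space n" "JK_type_at n c p K J"
    using JK_invariantsE[OF assms] by metis
  then obtain bl where bl: "JK_decomp (coadj_form n c (fst p)) (coadj_form n c (snd p)) bl" "kron_inv bl = K"
    unfolding JK_type_at_def has_JK_type_def by blast
  have "{\<mu>. \<exists>m. Jord \<mu> m \<in> set bl} \<subseteq> (\<lambda>b. case b of Jord \<mu> m \<Rightarrow> \<mu> | _ \<Rightarrow> 0) ` set bl" by force
  then have "finite {\<mu>. \<exists>m. Jord \<mu> m \<in> set bl}" by (rule finite_subset) simp
  then obtain \<nu> where "\<And>m. Jord \<nu> m \<notin> set bl" using ex_new_if_finite[OF infinite_UNIV_char_0] by blast
  then obtain C where "rank_at_most n (size K) C"
    "det (coadj_form n c (fst p) + (-\<nu>) \<cdot>\<^sub>m coadj_form n c (snd p) + C) \<noteq> 0"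
    using det_pencil_add_rank_at_most_ne_0[OF bl(1) coadj_form_carrier coadj_form_carrier] bl(2) by blast
  moreover have "coadj_form n c (fst p + (-\<nu>) \<cdot>\<^sub>v snd p) =
      coadj_form n c (fst p) + (-\<nu>) \<cdot>\<^sub>m coadj_form n c (snd p)"
    using p by (intro coadj_form_add_smult) (auto simp: pair_space_def)
  ultimately show thesis using that[of C "fst p + (-\<nu>) \<cdot>\<^sub>v snd p"] p(1) by (auto simp: pair_space_def)
qed

definition coadj_pencil_poly ::
    "nat \<Rightarrow> (nat \<Rightarrow> nat \<Rightarrow> nat \<Rightarrow> complex) \<Rightarrow> complex mat \<Rightarrow> complex vec \<times> complex vec \<Rightarrow> complex poly" where
  "coadj_pencil_poly n c C p = pencil_poly (coadj_form n c (fst p)) (coadj_form n c (snd p)) C"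

lemma degree_coadj_pencil_poly: "degree (coadj_pencil_poly n c C p) \<le> n"
  using degree_pencil_poly[of "coadj_form n c (fst p)"] by (simp add: coadj_pencil_poly_def)

lemma coadj_pencil_poly_nonzero:
  assumes "C \<in> carrier_mat n n" "dim_vec y = n" "det (coadj_form n c y + C) \<noteq> 0"
  shows "coadj_pencil_poly n c C (y, 0\<^sub>v n) \<noteq> 0"
proof -
  have "coadj_form n c y + (-0) \<cdot>\<^sub>m coadj_form n c (0\<^sub>v n) + C = coadj_form n c y + C"
    using assms(1) by (intro eq_matI) (auto simp: coadj_form_def)
  then have "poly (coadj_pencil_poly n c C (y, 0\<^sub>v n)) 0 \<noteq> 0"
    using assms by (simp add: coadj_pencil_poly_def poly_pencil_poly[OF coadj_form_carrier coadj_form_carrier])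
  then show ?thesis by auto
qed

lemma coadj_pencil_poly_shift:
  assumes "C \<in> carrier_mat n n" "p \<in> pair_space n"
  shows "coadj_pencil_poly n c C (fst p + t \<cdot>\<^sub>v snd p, snd p) = coadj_pencil_poly n c C p \<circ>\<^sub>p [:-t, 1:]"
proof -
  have "dim_vec (snd p) = n" using assms(2) by (auto simp: pair_space_def)
  then show ?thesis using pencil_poly_shift[OF coadj_form_carrier coadj_form_carrier assms(1)]
    by (simp add: coadj_pencil_poly_def coadj_form_add_smult)
qed

lemma polyfun_coadj_form_entry:
  assumes "i < n" "j < n"
  shows "(\<lambda>p. coadj_form n c (fst p) $$ (i, j)) \<in> polyfun n"
    and "(\<lambda>p. coadj_form n c (snd p) $$ (i, j)) \<in> polyfun n"
proof -
  interpret polyfun: ring_of_functions "polyfun n" by (rule ring_of_functions_polyfun)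
  show "(\<lambda>p. coadj_form n c (fst p) $$ (i, j)) \<in> polyfun n"
    using assms by (auto simp: coadj_form_def intro!: polyfun.sum polyfun.mult polyfun.const polyfun_fst)
  show "(\<lambda>p. coadj_form n c (snd p) $$ (i, j)) \<in> polyfun n"
    using assms by (auto simp: coadj_form_def intro!: polyfun.sum polyfun.mult polyfun.const polyfun_snd)
qed

lemma polyfun_poly_coadj_pencil_poly: "coadj_pencil_poly n c C \<in> polyfun_poly n"
proof -
  interpret polyfun: ring_of_functions "polyfun n" by (rule ring_of_functions_polyfun)
  have "(\<lambda>p. coadj_pencil_poly n c C p) \<in> polyfun_poly n"
    unfolding coadj_pencil_poly_def pencil_poly_def
    by (rule ring_of_functions.det[OF ring_of_functions_polyfun_poly, where m = n])
      (auto intro!: polyfun_poly_linear polyfun.add polyfun.uminus polyfun.const polyfun_coadj_form_entry)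
  then show ?thesis by simp
qed

lemma polyfun_det_coadj_form_add:
  assumes "C \<in> carrier_mat n n"
  shows "(\<lambda>p. det (coadj_form n c (snd p) + C)) \<in> polyfun n"
proof -
  interpret polyfun: ring_of_functions "polyfun n" by (rule ring_of_functions_polyfun)
  show ?thesis
    using assms by (intro polyfun.det[where m = n]) (auto intro!: polyfun.add polyfun.const polyfun_coadj_form_entry)
qed

section \<open>Separating the spectra of the summands\<close>

lemma resultant_eq_0_iff_common_root:
  fixes f g :: "complex poly"
  assumes "f \<noteq> 0"
  shows "resultant f g = 0 \<longleftrightarrow> (\<exists>z. poly f z = 0 \<and> poly g z = 0)"
proof
  assume "resultant f g = 0"
  then have "\<not> constant (poly (gcd f g))" by (simp add: resultant_0_gcd constant_degree)
  then obtain z where "poly (gcd f g) z = 0" using fundamental_theorem_of_algebra by blast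
  then show "\<exists>z. poly f z = 0 \<and> poly g z = 0" by (metis dvd_trans gcd_dvd1 gcd_dvd2 poly_eq_0_iff_dvd)
next
  assume "\<exists>z. poly f z = 0 \<and> poly g z = 0"
  then obtain z where "[:-z, 1:] dvd gcd f g" by (auto simp: poly_eq_0_iff_dvd)
  moreover have "gcd f g \<noteq> 0" using assms by simp
  ultimately have "degree (gcd f g) \<noteq> 0" using dvd_imp_degree_le[of "[:-z, 1:]"] by fastforce
  then show "resultant f g = 0" by (simp add: resultant_0_gcd)
qed

text \<open>The leading factors force the degrees to be exactly d and e, and then resultant_sub d e f g
  is the resultant of f and g; with d and e fixed, this is a polynomial in the coefficients.\<close>
definition sized_resultant :: "nat \<Rightarrow> nat \<Rightarrow> complex poly \<Rightarrow> complex poly \<Rightarrow> complex" where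
  "sized_resultant d e f g = coeff f d * coeff g e * resultant_sub d e f g"

lemma sized_resultant_no_common_root:
  assumes "degree f \<le> d" "degree g \<le> e" "sized_resultant d e f g \<noteq> 0" "poly f z = 0"
  shows "poly g z \<noteq> 0"
proof -
  have nz: "coeff f d \<noteq> 0" "coeff g e \<noteq> 0" "resultant_sub d e f g \<noteq> 0"
    using assms(3) by (auto simp: sized_resultant_def)
  then have "degree f = d" "degree g = e" using assms(1,2) le_degree by (metis antisym)+
  then have "resultant f g \<noteq> 0" using nz by (simp add: resultant_sub)
  moreover have "f \<noteq> 0" using nz by auto
  ultimately show ?thesis using resultant_eq_0_iff_common_root assms(4) by blast
qed

lemma sized_resultant_ne_0:
  assumes "degree f = d" "degree g = e" "f \<noteq> 0" "g \<noteq> 0" "\<And>z. poly f z = 0 \<Longrightarrow> poly g z \<noteq> 0"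
  shows "sized_resultant d e f g \<noteq> 0"
  using assms resultant_eq_0_iff_common_root[OF assms(3), of g]
  by (auto simp: sized_resultant_def resultant_sub)

lemma polyfun_sized_resultant:
  assumes "F \<in> polyfun_poly n" "G \<in> polyfun_poly n"
  shows "(\<lambda>p. sized_resultant d e (F p) (G p)) \<in> polyfun n"
proof -
  interpret polyfun: ring_of_functions "polyfun n" by (rule ring_of_functions_polyfun)
  have "(\<lambda>p. resultant_sub d e (F p) (G p)) \<in> polyfun n"
    unfolding resultant_sub_def
    by (rule polyfun.det[where m = "d + e"])
      (auto simp: sylvester_mat_sub_index intro!: polyfun.If polyfun.const polyfun_coeff assms)
  then show ?thesis unfolding sized_resultant_def using assms by (intro polyfun.mult polyfun_coeff)
qed

definition max_degree :: "nat \<Rightarrow> (complex vec \<times> complex vec \<Rightarrow> complex poly) \<Rightarrow> nat" where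
  "max_degree n F = Max {degree (F p) |p. p \<in> pair_space n \<and> F p \<noteq> 0}"

lemma degree_le_max_degree:
  assumes "\<And>p. degree (F p) \<le> m" "p \<in> pair_space n"
  shows "degree (F p) \<le> max_degree n F"
proof (cases "F p = 0")
  case False
  have "finite {degree (F p) |p. p \<in> pair_space n \<and> F p \<noteq> 0}"
    by (rule finite_subset[of _ "{..m}"]) (use assms(1) in auto)
  then show ?thesis using False assms(2) unfolding max_degree_def by (intro Max_ge) blast+
qed simp

lemma max_degree_attained:
  assumes "\<And>p. degree (F p) \<le> m" "q \<in> pair_space n" "F q \<noteq> 0"
  obtains p where "p \<in> pair_space n" "F p \<noteq> 0" "degree (F p) = max_degree n F"
proof -
  have "finite {degree (F p) |p. p \<in> pair_space n \<and> F p \<noteq> 0}"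
    by (rule finite_subset[of _ "{..m}"]) (use assms(1) in auto)
  moreover have "{degree (F p) |p. p \<in> pair_space n \<and> F p \<noteq> 0} \<noteq> {}" using assms(2,3) by blast
  ultimately have "max_degree n F \<in> {degree (F p) |p. p \<in> pair_space n \<and> F p \<noteq> 0}"
    unfolding max_degree_def by (rule Max_in)
  then show thesis using that by auto
qed

lemma exists_shift_no_common_root:
  fixes \<phi> \<psi> :: "complex poly"
  assumes "\<phi> \<noteq> 0" "\<psi> \<noteq> 0"
  obtains t where "\<And>z. poly \<phi> (z - t) = 0 \<Longrightarrow> poly \<psi> z \<noteq> 0"
proof -
  let ?D = "(\<lambda>(z1, z2). z2 - z1) ` ({z. poly \<phi> z = 0} \<times> {z. poly \<psi> z = 0})"
  have "finite ?D" using assms by (simp add: poly_roots_finite)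
  then obtain t where "t \<notin> ?D" using ex_new_if_finite[OF infinite_UNIV_char_0] by blast
  then show thesis by (intro that) force
qed

definition root_separation :: "nat \<Rightarrow> (complex vec \<times> complex vec \<Rightarrow> complex poly) \<Rightarrow>
    nat \<Rightarrow> (complex vec \<times> complex vec \<Rightarrow> complex poly) \<Rightarrow> complex vec \<times> complex vec \<Rightarrow> complex" where
  "root_separation n1 F1 n2 F2 p = sized_resultant (max_degree n1 F1) (max_degree n2 F2)
     (F1 (pair_slice 0 n1 p)) (F2 (pair_slice n1 n2 p))"

lemma polyfun_root_separation:
  "F1 \<in> polyfun_poly n1 \<Longrightarrow> F2 \<in> polyfun_poly n2 \<Longrightarrow> root_separation n1 F1 n2 F2 \<in> polyfun (n1 + n2)"
  unfolding root_separation_def by (intro polyfun_sized_resultant polyfun_poly_slice) auto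

lemma root_separation_no_common_root:
  assumes "\<And>p. degree (F1 p) \<le> d" "\<And>p. degree (F2 p) \<le> e"
    and "root_separation n1 F1 n2 F2 p \<noteq> 0" "poly (F1 (pair_slice 0 n1 p)) z = 0"
  shows "poly (F2 (pair_slice n1 n2 p)) z \<noteq> 0"
proof -
  have "degree (F1 (pair_slice 0 n1 p)) \<le> max_degree n1 F1"
    "degree (F2 (pair_slice n1 n2 p)) \<le> max_degree n2 F2"
    by (rule degree_le_max_degree[OF assms(1)], simp, rule degree_le_max_degree[OF assms(2)], simp)
  then show ?thesis
    using assms(3,4) unfolding root_separation_def by (rule sized_resultant_no_common_root)
qed

lemma root_separation_nonzero:
  assumes deg: "\<And>p. degree (F1 p) \<le> d" "\<And>p. degree (F2 p) \<le> e"
    and nz: "q \<in> pair_space n1" "F1 q \<noteq> 0" "q' \<in> pair_space n2" "F2 q' \<noteq> 0"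
    and shift: "\<And>p t. p \<in> pair_space n1 \<Longrightarrow> F1 (fst p + t \<cdot>\<^sub>v snd p, snd p) = F1 p \<circ>\<^sub>p [:-t, 1:]"
  shows "\<exists>p\<in>pair_space (n1 + n2). root_separation n1 F1 n2 F2 p \<noteq> 0"
proof -
  obtain p1 where p1: "p1 \<in> pair_space n1" "F1 p1 \<noteq> 0" "degree (F1 p1) = max_degree n1 F1"
    by (rule max_degree_attained[where F = F1]) (use deg(1) nz(1,2) in auto)
  obtain p2 where p2: "p2 \<in> pair_space n2" "F2 p2 \<noteq> 0" "degree (F2 p2) = max_degree n2 F2"
    by (rule max_degree_attained[where F = F2]) (use deg(2) nz(3,4) in auto)
  obtain t where t: "\<And>z. poly (F1 p1) (z - t) = 0 \<Longrightarrow> poly (F2 p2) z \<noteq> 0"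
    using exists_shift_no_common_root[OF p1(2) p2(2)] by blast
  define p1' where "p1' = (fst p1 + t \<cdot>\<^sub>v snd p1, snd p1)"
  have p1': "p1' \<in> pair_space n1" "F1 p1' = F1 p1 \<circ>\<^sub>p [:-t, 1:]"
    using p1(1) shift by (auto simp: p1'_def pair_space_def)
  have "sized_resultant (max_degree n1 F1) (max_degree n2 F2) (F1 p1') (F2 p2) \<noteq> 0"
    using p1 p2 t by (intro sized_resultant_ne_0) (auto simp: p1'(2) degree_pcompose poly_pcompose pcompose_eq_0_iff)
  then show ?thesis
    using pair_slice_append[OF p1'(1) p2(1)] pair_append_space[OF p1'(1) p2(1)]
    unfolding root_separation_def by metis
qed

text \<open>Its nonvanishing at a point means that the pencil of the first summand has no infinite
  eigenvalue and that the two summands have no finite eigenvalue in common.\<close>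
definition dsum_genericity :: "nat \<Rightarrow> (nat \<Rightarrow> nat \<Rightarrow> nat \<Rightarrow> complex) \<Rightarrow> complex mat \<Rightarrow>
    nat \<Rightarrow> (nat \<Rightarrow> nat \<Rightarrow> nat \<Rightarrow> complex) \<Rightarrow> complex mat \<Rightarrow> complex vec \<times> complex vec \<Rightarrow> complex" where
  "dsum_genericity n1 c1 C1 n2 c2 C2 p =
     det (coadj_form n1 c1 (snd (pair_slice 0 n1 p)) + C1) *
     root_separation n1 (coadj_pencil_poly n1 c1 C1) n2 (coadj_pencil_poly n2 c2 C2) p"

lemma polyfun_dsum_genericity:
  assumes "C1 \<in> carrier_mat n1 n1"
  shows "dsum_genericity n1 c1 C1 n2 c2 C2 \<in> polyfun (n1 + n2)"
proof -
  interpret polyfun: ring_of_functions "polyfun (n1 + n2)" by (rule ring_of_functions_polyfun)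
  show ?thesis
    unfolding dsum_genericity_def
    using polyfun_slice[OF polyfun_det_coadj_form_add[OF assms], of 0 "n1 + n2"]
      polyfun_root_separation[OF polyfun_poly_coadj_pencil_poly polyfun_poly_coadj_pencil_poly]
    by (intro polyfun.mult) (auto simp: pair_slice_def)
qed

lemma dsum_genericity_nonzero:
  assumes C1: "C1 \<in> carrier_mat n1 n1" "dim_vec y1 = n1" "det (coadj_form n1 c1 y1 + C1) \<noteq> 0"
    and C2: "C2 \<in> carrier_mat n2 n2" "dim_vec y2 = n2" "det (coadj_form n2 c2 y2 + C2) \<noteq> 0"
  shows "\<exists>p\<in>pair_space (n1 + n2). dsum_genericity n1 c1 C1 n2 c2 C2 p \<noteq> 0"
proof -
  let ?g = "\<lambda>p. det (coadj_form n1 c1 (snd (pair_slice 0 n1 p)) + C1)"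
  let ?R = "root_separation n1 (coadj_pencil_poly n1 c1 C1) n2 (coadj_pencil_poly n2 c2 C2)"
  have y: "(y1, 0\<^sub>v n1) \<in> pair_space n1" "(0\<^sub>v n1, y1) \<in> pair_space n1" "(y2, 0\<^sub>v n2) \<in> pair_space n2"
    using C1(2) C2(2) by (auto simp: pair_space_def intro: carrier_vecI)
  then obtain q where q: "q \<in> pair_space (n1 + n2)" "?g q \<noteq> 0"
    using exists_pair_slice_nonzero(1)[OF y(2), of "\<lambda>q. det (coadj_form n1 c1 (snd q) + C1)" n2] C1(3)
    by auto
  have "\<exists>q'\<in>pair_space (n1 + n2). ?R q' \<noteq> 0"
  proof (rule root_separation_nonzero[where d = n1 and e = n2])
    show "coadj_pencil_poly n1 c1 C1 (y1, 0\<^sub>v n1) \<noteq> 0" "coadj_pencil_poly n2 c2 C2 (y2, 0\<^sub>v n2) \<noteq> 0"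
      by (rule coadj_pencil_poly_nonzero[OF C1], rule coadj_pencil_poly_nonzero[OF C2])
  qed (use y in \<open>simp_all add: degree_coadj_pencil_poly coadj_pencil_poly_shift[OF C1(1)]\<close>)
  then obtain q' where "q' \<in> pair_space (n1 + n2)" "?R q' \<noteq> 0" by blast
  moreover note q
  moreover have "?g \<in> polyfun (n1 + n2)"
    using polyfun_slice[OF polyfun_det_coadj_form_add[OF C1(1)], of 0 "n1 + n2"] by (simp add: pair_slice_def)
  moreover have "?R \<in> polyfun (n1 + n2)"
    by (intro polyfun_root_separation polyfun_poly_coadj_pencil_poly)
  ultimately obtain r where "r \<in> pair_space (n1 + n2)" "?g r * ?R r \<noteq> 0"
    using polyfun_nonzero_mult[of ?g "n1 + n2" q ?R q'] q(1) by blast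
  then show ?thesis by (intro bexI[of _ r], simp_all add: dsum_genericity_def)
qed

lemma JK_type_at_lie_dsum:
  assumes T1: "JK_type_at n1 c1 (pair_slice 0 n1 p) K1 J1" and T2: "JK_type_at n2 c2 (pair_slice n1 n2 p) K2 J2"
    and C1: "rank_at_most n1 (size K1) C1" and C2: "rank_at_most n2 (size K2) C2"
    and generic: "dsum_genericity n1 c1 C1 n2 c2 C2 p \<noteq> 0"
  shows "JK_type_at (n1 + n2) (lie_dsum n1 c1 n2 c2) p (K1 + K2) (J1 + J2)"
proof -
  let ?p1 = "pair_slice 0 n1 p" and ?p2 = "pair_slice n1 n2 p"
  obtain bl1 where bl1: "JK_decomp (coadj_form n1 c1 (fst ?p1)) (coadj_form n1 c1 (snd ?p1)) bl1"
      "kron_inv bl1 = K1" "jord_inv bl1 = J1"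
    using T1 unfolding JK_type_at_def has_JK_type_def by blast
  obtain bl2 where bl2: "JK_decomp (coadj_form n2 c2 (fst ?p2)) (coadj_form n2 c2 (snd ?p2)) bl2"
      "kron_inv bl2 = K2" "jord_inv bl2 = J2"
    using T2 unfolding JK_type_at_def has_JK_type_def by blast
  have regular: "det (coadj_form n1 c1 (snd ?p1) + C1) \<noteq> 0"
    and separated: "root_separation n1 (coadj_pencil_poly n1 c1 C1) n2 (coadj_pencil_poly n2 c2 C2) p \<noteq> 0"
    using generic by (auto simp: dsum_genericity_def)
  have "JK_decomp (coadj_form (n1 + n2) (lie_dsum n1 c1 n2 c2) (fst p))
      (coadj_form (n1 + n2) (lie_dsum n1 c1 n2 c2) (snd p)) (bl1 @ bl2)"
    unfolding coadj_form_lie_dsum using JK_decomp_four_block_diag[OF bl1(1) bl2(1)] coadj_form_carrier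
    by (simp add: pair_slice_def)
  moreover have "jord_ev b1 \<noteq> jord_ev b2"
    if b: "b1 \<in> set bl1" "b2 \<in> set bl2" "jord_ev b1 \<noteq> None" for b1 b2
  proof (cases b1)
    case (Kron k)
    then show ?thesis using b by simp
  next
    case (JordInf m)
    then show ?thesis
      using b no_infinite_eigenvalue[OF bl1(1) coadj_form_carrier coadj_form_carrier _ regular] C1 bl1(2)
      by auto
  next
    case (Jord \<mu> m)
    have "poly (coadj_pencil_poly n1 c1 C1 ?p1) \<mu> = 0"
      using pencil_poly_eigenvalue_root[OF bl1(1) coadj_form_carrier coadj_form_carrier] b Jord C1 bl1(2)
      by (simp add: coadj_pencil_poly_def)
    then have "poly (coadj_pencil_poly n2 c2 C2 ?p2) \<mu> \<noteq> 0"
      using separated by (intro root_separation_no_common_root[where d = n1 and e = n2])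
        (simp_all add: degree_coadj_pencil_poly)
    then have "Jord \<mu> m' \<notin> set bl2" for m'
      using pencil_poly_eigenvalue_root[OF bl2(1) coadj_form_carrier coadj_form_carrier] C2 bl2(2)
      by (auto simp: coadj_pencil_poly_def)
    then show ?thesis using b Jord by (cases b2) auto
  qed
  ultimately show ?thesis
    unfolding JK_type_at_def has_JK_type_def
    using bl1 bl2 kron_inv_append jord_inv_append by metis
qed

theorem theorem4:
  fixes n1 n2 :: nat and c1 c2 :: "nat \<Rightarrow> nat \<Rightarrow> nat \<Rightarrow> complex"
    and K1 K2 :: "nat multiset" and J1 J2 :: "nat multiset multiset"
  assumes "lie_alg n1 c1" and "lie_alg n2 c2"
    and "JK_invariants n1 c1 K1 J1" and "JK_invariants n2 c2 K2 J2"
  shows "JK_invariants (n1 + n2) (lie_dsum n1 c1 n2 c2) (K1 + K2) (J1 + J2)"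
proof -
  obtain u1 where u1: "u1 \<in> polyfun n1" "\<exists>p\<in>pair_space n1. u1 p \<noteq> 0"
    "\<And>p. p \<in> pair_space n1 \<Longrightarrow> u1 p \<noteq> 0 \<Longrightarrow> JK_type_at n1 c1 p K1 J1"
    using JK_invariantsE[OF assms(3)] by metis
  obtain u2 where u2: "u2 \<in> polyfun n2" "\<exists>p\<in>pair_space n2. u2 p \<noteq> 0"
    "\<And>p. p \<in> pair_space n2 \<Longrightarrow> u2 p \<noteq> 0 \<Longrightarrow> JK_type_at n2 c2 p K2 J2"
    using JK_invariantsE[OF assms(4)] by metis
  obtain C1 y1 where C1: "rank_at_most n1 (size K1) C1" "dim_vec y1 = n1" "det (coadj_form n1 c1 y1 + C1) \<noteq> 0"
    using exists_regular_perturbation[OF assms(3)] by metis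
  obtain C2 y2 where C2: "rank_at_most n2 (size K2) C2" "dim_vec y2 = n2" "det (coadj_form n2 c2 y2 + C2) \<noteq> 0"
    using exists_regular_perturbation[OF assms(4)] by metis
  show ?thesis
  proof (rule JK_invariantsI[where hs = "[\<lambda>p. u1 (pair_slice 0 n1 p), \<lambda>p. u2 (pair_slice n1 n2 p),
      dsum_genericity n1 c1 C1 n2 c2 C2]"])
    fix h assume "h \<in> set [\<lambda>p. u1 (pair_slice 0 n1 p), \<lambda>p. u2 (pair_slice n1 n2 p),
      dsum_genericity n1 c1 C1 n2 c2 C2]"
    moreover obtain q1 q2 where "q1 \<in> pair_space n1" "u1 q1 \<noteq> 0" "q2 \<in> pair_space n2" "u2 q2 \<noteq> 0"
      using u1(2) u2(2) by blast
    ultimately show "h \<in> polyfun (n1 + n2) \<and> (\<exists>p\<in>pair_space (n1 + n2). h p \<noteq> 0)"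
      using polyfun_slice[OF u1(1), of 0 "n1 + n2"] polyfun_slice[OF u2(1), of n1 "n1 + n2"]
        exists_pair_slice_nonzero(1)[of q1 n1 u1 n2] exists_pair_slice_nonzero(2)[of q2 n2 u2 n1]
        polyfun_dsum_genericity[OF rank_at_most_carrier[OF C1(1)]]
        dsum_genericity_nonzero[OF rank_at_most_carrier[OF C1(1)] C1(2,3) rank_at_most_carrier[OF C2(1)] C2(2,3)]
      by auto
  next
    fix p assume "p \<in> pair_space (n1 + n2)" "\<forall>h\<in>set [\<lambda>p. u1 (pair_slice 0 n1 p),
      \<lambda>p. u2 (pair_slice n1 n2 p), dsum_genericity n1 c1 C1 n2 c2 C2]. h p \<noteq> 0"
    then show "JK_type_at (n1 + n2) (lie_dsum n1 c1 n2 c2) p (K1 + K2) (J1 + J2)"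
      using u1(3) u2(3) by (intro JK_type_at_lie_dsum[OF _ _ C1(1) C2(1)], auto)
  qed
qed

end
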